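(* Fix $0<\alpha<1$, $r>0$. Let $\Pi$ be the exchangeable random partition of $\{1,2,\dots\}$ generated by sampling from a random discrete distribution whose ranked atom sizes have the $\textbf{PD}_\alpha^{(r)}$ distribution, and let $p(n_1,\dots,n_k)$ be its exchangeable partition probability function, i.e. $\mathbb{P}(\Pi_n=\{A_1,\dots,A_k\})=p(\#A_1,\dots,\#A_k)$ for each partition $\{A_1,\dots,A_k\}$ of $\{1,\dots,n\}$, where $\Pi_n$ is the restriction of $\Pi$ to $\{1,\dots,n\}$. Then, for positive integers $n_1,\dots,n_k$ with $\sum_i n_i=n$, $$ p(n_1,\dots,n_k)=r^{[k]}\int_0^\infty\!\!\cdots\!\int_0^\infty\int_0^\infty \frac{g_{r+k}(w)\prod_{i=1}^k\rho(x_i)x_i^{n_i}}{\big(w+\sum_{i=1}^k x_i\big)^n}\,dw\,dx_1\cdots dx_k $$ and $$ p(n_1,\dots,n_k)=\frac{\alpha^k r^{[k]}}{\Gamma(n)}\prod_{i=1}^k\Gamma(n_i-\alpha)\int_0^\infty\frac{\lambda^{k\alpha-1}}{\Psi(\lambda)^{r+k}}\prod_{i=1}^k G_{n_i-\alpha}(\lambda)\,d\lambda, $$ where $\rho(x)=\alpha x^{-\alpha-1}\mathbf 1_{\{0<x\le1\}}$, $r^{[k]}=r(r+1)\cdots(r+k-1)$, $\Psi(\lambda)=1+\alpha\int_0^1(1-e^{-\lambda x})x^{-\alpha-1}dx$, $G_{n_i-\alpha}(\lambda)=\frac{1}{\Gamma(n_i-\alpha)}\int_0^\lambda x^{n_i-\alpha-1}e^{-x}dx$,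 and $g_s$ ($s>0$) is the probability density on $(0,\infty)$ with Laplace transform $\int_0^\infty e^{-\lambda x}g_s(x)\,dx=\Psi(\lambda)^{-s}$.
   Context: Let $\Lambda(dx)=\rho(x)dx$. A negative binomial point process with parameter $r>0$ and measure $\Lambda$ is a random point measure $\mathbb{B}^{(r)}$ on $(0,\infty)$ with Laplace functional $\mathbb{E}\big(e^{-\mathbb{B}^{(r)}(f)}\big)=\big(1+\int(1-e^{-f})d\Lambda\big)^{-r}$. With points $J_1\ge J_2\ge\cdots$ and $T=\sum_iJ_i$, the $\textbf{PD}_\alpha^{(r)}$ distribution is the law of $(J_i/T)_{i\ge1}$ (for integer $r$ equivalently the law of the jumps $\Delta S_1^{(r+1)},\Delta S_1^{(r+2)},\dots$ of a driftless $\alpha$-stable subordinator with Lévy density $\alpha x^{-\alpha-1}$ on $[0,1]$, divided by $S_1$ minus its $r$ largest jumps). Sampling: given weights $(P_i)$, let $Y_i$ be i.i.d. diffuse labels independent of $(P_i)$ and $X_1,X_2,\dots$ conditionally i.i.d. with $\mathbb{P}(X_\ell=Y_i\mid\cdot)=P_i$; $\ell\sim\ell'$ in $\Pi$ iff $X_\ell=X_{\ell'}$. *)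

theory Defs
  imports "HOL-Probability.Probability"
begin

definition rhoPD :: "real \<Rightarrow> real \<Rightarrow> real" where
  "rhoPD \<alpha> x = (if 0 < x \<and> x \<le> 1 then \<alpha> * x powr (-\<alpha>-1) else 0)"

definition PsiPD :: "real \<Rightarrow> real \<Rightarrow> real" where
  "PsiPD \<alpha> lam = 1 + \<alpha> * (\<integral>x\<in>{0<..1}. (1 - exp (-lam*x)) * x powr (-\<alpha>-1) \<partial>lborel)"

definition Ginc :: "real \<Rightarrow> real \<Rightarrow> real" where
  "Ginc a lam = (\<integral>x\<in>{0..lam}. x powr (a-1) * exp (-x) \<partial>lborel) / Gamma a"

definition expneg :: "ennreal \<Rightarrow> real" where
  "expneg b = (if b = \<top> then 0 else exp (- enn2real b))"

text \<open>Right-hand side of the negative binomial Laplace functional: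
  (1 + int (1 - e^(-f)) d Lambda)^(-r), read as 0 if the integral is infinite.\<close>
definition NB_laplace :: "real \<Rightarrow> real \<Rightarrow> (real \<Rightarrow> real) \<Rightarrow> real" where
  "NB_laplace \<alpha> r f =
     (let L = (\<integral>\<^sup>+x. ennreal ((1 - exp (- f x)) * rhoPD \<alpha> x) \<partial>lborel)
      in if L = \<top> then 0 else (1 + enn2real L) powr (-r))"

definition induced_partition :: "nat \<Rightarrow> (nat \<Rightarrow> nat) \<Rightarrow> nat set set" where
  "induced_partition n x = {1..n} // {(l, l'). l \<in> {1..n} \<and> l' \<in> {1..n} \<and> x l = x l'}"

text \<open>Conditional probability, given the weights P (atom i has weight P i and
  carries a distinct label), that the partition of {1..n} generated by n
  conditionally i.i.d. samples equals pi.\<close>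
definition sample_partition_prob :: "(nat \<Rightarrow> real) \<Rightarrow> nat \<Rightarrow> nat set set \<Rightarrow> ennreal" where
  "sample_partition_prob P n \<pi> =
     (\<integral>\<^sup>+x. (\<Prod>l\<in>{1..n}. ennreal (P (x l))) * indicator {x. induced_partition n x = \<pi>} x
        \<partial>count_space ({1..n} \<rightarrow>\<^sub>E (UNIV :: nat set)))"

end

theory Submission
  imports Defs
begin

text \<open>
  Write \<open>J\<^sub>i\<close> for the points of the negative binomial process, \<open>N(f) = \<Sum>\<^sub>i f(J\<^sub>i)\<close> and
  \<open>\<Phi>(f) = 1 + \<integral>(1 - e\<^sup>-\<^sup>f) d\<Lambda>\<close>. The heart of the proof is the moment formula
  \<open>E[e\<^sup>-\<^sup>N\<^sup>(\<^sup>f\<^sup>) \<Sum> \<Prod>\<^sub>j h\<^sub>j(J\<^sub>i\<^sub>j)] = r\<^sup>[\<^sup>k\<^sup>] \<Phi>(f)\<^sup>-\<^sup>(\<^sup>r\<^sup>+\<^sup>k\<^sup>) \<Prod>\<^sub>j \<integral> e\<^sup>-\<^sup>f h\<^sub>j d\<Lambda>\<close>, the sum running over pairwise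
  distinct indices \<open>i\<^sub>1, \<dots>, i\<^sub>k\<close>. For \<open>k = 0\<close> it is the Laplace functional. To pass from \<open>k\<close> to
  \<open>k + 1\<close>, differentiate the formula for \<open>k\<close> along \<open>f + s h\<^sub>k\<close> at \<open>s = 0\<^sup>+\<close>: on the left this brings
  down a factor \<open>N(h\<^sub>k)\<close>, and \<open>N(h\<^sub>k)\<close> times a sum over \<open>k\<close> distinct indices is the sum over \<open>k + 1\<close>
  distinct indices plus \<open>k\<close> sums in which \<open>h\<^sub>k\<close> is merged into one of the other factors.

  Given the weights \<open>J\<^sub>i / T\<close>, the sample induces the partition \<open>{A\<^sub>1, \<dots>, A\<^sub>k}\<close> with probability
  \<open>\<Sum>\<^sub>\<sigma> \<Prod>\<^sub>j (J\<^sub>\<sigma>\<^sub>(\<^sub>j\<^sub>) / T)\<^sup>n\<^sup>j\<close>, summed over injective labellings \<open>\<sigma>\<close> of the blocks. Writing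
  \<open>T\<^sup>-\<^sup>n = \<integral>\<^sub>0\<^sup>\<infinity> t\<^sup>n\<^sup>-\<^sup>1 e\<^sup>-\<^sup>t\<^sup>T dt / (n - 1)!\<close> turns its expectation into an integral over \<open>t\<close> of the moment
  formula with \<open>f(x) = t x\<close> and \<open>h\<^sub>j(x) = x\<^sup>n\<^sup>j\<close>. Both expressions of the theorem equal this integral:
  the first after expanding \<open>\<Psi>(t)\<^sup>-\<^sup>(\<^sup>r\<^sup>+\<^sup>k\<^sup>)\<close> as the Laplace transform of \<open>g\<^sub>r\<^sub>+\<^sub>k\<close>, the second after
  evaluating \<open>\<integral> e\<^sup>-\<^sup>t\<^sup>x x\<^sup>n\<^sup>j \<rho>(x) dx = \<alpha> t\<^sup>\<alpha>\<^sup>-\<^sup>n\<^sup>j \<Gamma>(n\<^sub>j - \<alpha>) G\<^sub>n\<^sub>j\<^sub>-\<^sub>\<alpha>(t)\<close>.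
\<close>

lemma one_minus_exp_neg_le: "1 - exp (- y) \<le> (y::real)"
  using exp_ge_add_one_self[of "-y"] by simp

lemma tendsto_one_minus_exp_div:
  fixes y :: real
  shows "((\<lambda>s. (1 - exp (- s * y)) / s) \<longlongrightarrow> y) (at_right 0)"
proof -
  have "((\<lambda>s. exp (- s * y)) has_field_derivative - y) (at 0 within {0<..})"
    by (auto intro!: derivative_eq_intros)
  then have "((\<lambda>s. (exp (- s * y) - 1) / s) \<longlongrightarrow> - y) (at_right 0)"
    unfolding has_field_derivative_iff by simp
  then have "((\<lambda>s. - ((exp (- s * y) - 1) / s)) \<longlongrightarrow> y) (at_right 0)"
    using tendsto_minus by fastforce
  then show ?thesis by (simp add: minus_divide_left)
qed

lemma one_minus_exp_neg_div_antimono: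
  fixes a b :: real assumes "0 < a" "a \<le> b"
  shows "(1 - exp (- b)) / b \<le> (1 - exp (- a)) / a"
proof (rule DERIV_nonpos_imp_nonincreasing[OF assms(2)])
  fix z :: real assume "a \<le> z" "z \<le> b"
  then have z: "0 < z" using assms by linarith
  have "exp (- z) * (1 + z) \<le> exp (- z) * exp z"
    using exp_ge_add_one_self[of z] by (intro mult_left_mono) (auto simp: add.commute)
  then have "(exp (- z) * z - (1 - exp (- z))) / (z * z) \<le> 0"
    by (intro divide_nonpos_nonneg) (auto simp: exp_minus field_simps)
  moreover have "DERIV (\<lambda>z. (1 - exp (- z)) / z) z :> (exp (- z) * z - (1 - exp (- z))) / (z * z)"
    using z by (auto intro!: derivative_eq_intros)
  ultimately show "\<exists>y. DERIV (\<lambda>z. (1 - exp (- z)) / z) z :> y \<and> y \<le> 0" by blast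
qed

lemma one_minus_exp_scaled_div_antimono:
  fixes s t y :: real assumes "0 < s" "s \<le> t" "0 \<le> y"
  shows "(1 - exp (- t * y)) / t \<le> (1 - exp (- s * y)) / s"
proof (cases "y = 0")
  case False
  with assms have y: "0 < y" by simp
  have "y * ((1 - exp (- (t * y))) / (t * y)) \<le> y * ((1 - exp (- (s * y))) / (s * y))"
    using assms y by (intro mult_left_mono one_minus_exp_neg_div_antimono) (auto intro: mult_right_mono)
  then show ?thesis using y assms by simp
qed simp

lemma tendsto_integral_one_minus_exp_div:
  fixes v u :: "real \<Rightarrow> real"
  assumes [measurable]: "v \<in> borel_measurable borel" "u \<in> borel_measurable borel"
    and nonneg: "\<And>x. 0 \<le> v x" "\<And>x. 0 \<le> u x"
    and int: "integrable lborel (\<lambda>x. v x * u x)"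
  shows "((\<lambda>s. (LINT x|lborel. v x * (1 - exp (- s * u x))) / s) \<longlongrightarrow> (LINT x|lborel. v x * u x)) (at_right 0)"
proof (rule tendsto_at_right_sequentially[where b=1])
  fix S :: "nat \<Rightarrow> real"
  assume S: "\<And>n. 0 < S n" "\<And>n. S n < 1" "S \<longlonglongrightarrow> 0"
  have "(\<lambda>n. LINT x|lborel. v x * ((1 - exp (- S n * u x)) / S n)) \<longlonglongrightarrow> (LINT x|lborel. v x * u x)"
  proof (rule integral_dominated_convergence[where w="\<lambda>x. v x * u x"])
    show "AE x in lborel. (\<lambda>n. v x * ((1 - exp (- S n * u x)) / S n)) \<longlonglongrightarrow> v x * u x"
    proof (rule AE_I2)
      fix x
      have "filterlim S (at_right 0) sequentially"
        using S by (intro tendsto_imp_filterlim_at_right) auto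
      then show "(\<lambda>n. v x * ((1 - exp (- S n * u x)) / S n)) \<longlonglongrightarrow> v x * u x"
        by (intro tendsto_mult tendsto_const filterlim_compose[OF tendsto_one_minus_exp_div])
    qed
    show "AE x in lborel. norm (v x * ((1 - exp (- S n * u x)) / S n)) \<le> v x * u x" for n
    proof (intro AE_I2)
      fix x
      have "0 \<le> (1 - exp (- S n * u x)) / S n" "(1 - exp (- S n * u x)) / S n \<le> u x"
        using S(1)[of n] nonneg(2)[of x] one_minus_exp_neg_le[of "S n * u x"]
        by (auto simp: divide_le_eq mult.commute)
      then show "norm (v x * ((1 - exp (- S n * u x)) / S n)) \<le> v x * u x"
        using nonneg(1)[of x] by (metis abs_of_nonneg mult_left_mono mult_nonneg_nonneg real_norm_def)
    qed
  qed (use int in auto)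
  then show "(\<lambda>n. (LINT x|lborel. v x * (1 - exp (- S n * u x))) / S n) \<longlonglongrightarrow> (LINT x|lborel. v x * u x)"
    by (simp only: times_divide_eq_right integral_divide_zero)
qed simp

lemma has_field_derivative_prod_within:
  assumes "\<And>x. x \<in> A \<Longrightarrow> (f x has_field_derivative f' x) (at z within T)"
  shows "((\<lambda>u. \<Prod>x\<in>A. f x u) has_field_derivative (\<Sum>x\<in>A. f' x * (\<Prod>y\<in>A-{x}. f y z))) (at z within T)"
proof -
  have "((\<lambda>u. \<Prod>x\<in>A. f x u) has_derivative (\<lambda>y. \<Sum>x\<in>A. f' x * y * (\<Prod>y\<in>A-{x}. f y z))) (at z within T)"
    using assms by (intro has_derivative_prod) (simp add: has_field_derivative_def)
  moreover have "(\<lambda>y. \<Sum>x\<in>A. f' x * y * (\<Prod>y\<in>A-{x}. f y z)) = (*) (\<Sum>x\<in>A. f' x * (\<Prod>y\<in>A-{x}. f y z))"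
    by (simp add: fun_eq_iff sum_distrib_left mult_ac)
  ultimately show ?thesis by (simp add: has_field_derivative_def)
qed

lemma nn_integral_power_exp:
  fixes T :: real assumes T: "0 < T"
  shows "(\<integral>\<^sup>+t\<in>{0<..}. ennreal (t ^ m * exp (- t * T)) \<partial>lborel) = ennreal (fact m / T ^ Suc m)"
    (is "?I = _")
proof -
  have "ennreal T * ?I = (\<integral>\<^sup>+t. ennreal (erlang_density 0 T t * t ^ m) \<partial>lborel)"
  proof (subst nn_integral_cmult[symmetric], measurable, rule nn_integral_cong_AE)
    show "AE t in lborel. ennreal T * (ennreal (t ^ m * exp (- t * T)) * indicator {0<..} t)
        = ennreal (erlang_density 0 T t * t ^ m)"
      using AE_lborel_singleton[of 0]
    proof eventually_elim
      case (elim t)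
      with T show ?case
        by (cases "0 < t") (auto simp: erlang_density_def indicator_def ennreal_mult'[symmetric] mult_ac)
    qed
  qed
  also have "\<dots> = ennreal (fact m / T ^ m)"
    using nn_integral_erlang_ith_moment[OF T, of 0 m] by simp
  finally have E: "ennreal T * ?I = ennreal (fact m / T ^ m)" .
  have "?I = ennreal (1 / T) * (ennreal T * ?I)"
    using T by (simp add: mult.assoc[symmetric] ennreal_mult[symmetric])
  also have "\<dots> = ennreal (fact m / T ^ Suc m)"
    unfolding E using T by (simp add: ennreal_mult[symmetric])
  finally show ?thesis .
qed

lemma inverse_power_eq_gamma_integral:
  fixes T :: real assumes T: "0 < T" and n: "0 < n"
  shows "ennreal (1 / T ^ n) = (\<integral>\<^sup>+t\<in>{0<..}. ennreal (t ^ (n - 1) / fact (n - 1) * exp (- t * T)) \<partial>lborel)"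
proof -
  have "(\<integral>\<^sup>+t\<in>{0<..}. ennreal (t ^ (n - 1) / fact (n - 1) * exp (- t * T)) \<partial>lborel)
      = (\<integral>\<^sup>+t. ennreal (1 / fact (n - 1)) * (ennreal (t ^ (n - 1) * exp (- t * T)) * indicator {0<..} t) \<partial>lborel)"
    by (intro nn_integral_cong) (auto simp: indicator_def ennreal_mult[symmetric])
  also have "\<dots> = ennreal (1 / fact (n - 1)) * ennreal (fact (n - 1) / T ^ n)"
    using nn_integral_power_exp[OF T, of "n - 1"] n by (subst nn_integral_cmult) auto
  also have "\<dots> = ennreal (1 / T ^ n)"
    using T by (simp add: ennreal_mult[symmetric])
  finally show ?thesis ..
qed

lemma Ginc_measurable[measurable]: "Ginc a \<in> borel_measurable borel"
proof -
  have "Ginc a = (\<lambda>lam. (LINT x|lborel. (if 0 \<le> x \<and> x \<le> lam then 1 else 0) *\<^sub>R (x powr (a - 1) * exp (- x))) / Gamma a)"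
    unfolding Ginc_def[abs_def] set_lebesgue_integral_def by (auto simp: indicator_def of_bool_def fun_eq_iff)
  also have "\<dots> \<in> borel_measurable borel" by measurable
  finally show ?thesis .
qed

lemma Ginc_nonneg: "0 < a \<Longrightarrow> 0 \<le> Ginc a t"
  unfolding Ginc_def set_lebesgue_integral_def
  by (intro divide_nonneg_pos integral_nonneg_AE AE_I2) (auto simp: indicator_def)

lemma integrable_powr_exp_on_interval:
  fixes a t :: real assumes a: "0 < a" and t: "0 \<le> t"
  shows "integrable lborel (\<lambda>y. indicator {0..t} y *\<^sub>R (y powr (a - 1) * exp (- y)))"
proof (rule Bochner_Integration.integrable_bound)
  have "(\<integral>\<^sup>+y. ennreal (indicator {0..t} y * y powr (a - 1)) \<partial>lborel) = ennreal (t powr (a - 1 + 1) / (a - 1 + 1))"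
    using has_integral_powr_from_0[of "a - 1" t] a t by (intro nn_integral_has_integral_lebesgue) auto
  then show "integrable lborel (\<lambda>y. indicator {0..t} y * y powr (a - 1))"
    by (intro integrableI_nonneg) auto
  show "AE y in lborel. norm (indicator {0..t} y *\<^sub>R (y powr (a - 1) * exp (- y))) \<le> norm (indicator {0..t} y * y powr (a - 1))"
    by (intro AE_I2) (auto simp: indicator_def mult_left_le)
qed simp

text \<open>Substituting \<open>y = t x\<close> turns the integral over \<open>(0,1]\<close> into a lower incomplete Gamma integral.\<close>
lemma nn_integral_powr_exp_unit_interval:
  fixes a t :: real assumes a: "0 < a" and t: "0 < t"
  shows "(\<integral>\<^sup>+x\<in>{0<..1}. ennreal (x powr (a - 1) * exp (- t * x)) \<partial>lborel) = ennreal (t powr (- a) * Gamma a * Ginc a t)"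
proof -
  have "(\<integral>\<^sup>+x\<in>{0<..1}. ennreal (x powr (a - 1) * exp (- t * x)) \<partial>lborel)
      = ennreal (1 / t) * (\<integral>\<^sup>+y. ennreal ((y / t) powr (a - 1) * exp (- y)) * indicator {0<..1} (y / t) \<partial>lborel)"
    using nn_integral_real_affine[where c="1 / t" and t=0 and f="\<lambda>x. ennreal (x powr (a - 1) * exp (- t * x)) * indicator {0<..1} x"] t
    by simp
  also have "(\<integral>\<^sup>+y. ennreal ((y / t) powr (a - 1) * exp (- y)) * indicator {0<..1} (y / t) \<partial>lborel)
      = (\<integral>\<^sup>+y. ennreal (t powr (1 - a)) * ennreal (indicator {0..t} y *\<^sub>R (y powr (a - 1) * exp (- y))) \<partial>lborel)"
  proof (rule nn_integral_cong)
    fix y :: real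
    have "(y / t) powr (a - 1) = t powr (1 - a) * y powr (a - 1)" if "0 < y"
      using that t by (simp add: powr_divide powr_minus_divide[symmetric] powr_diff divide_simps)
    then show "ennreal ((y / t) powr (a - 1) * exp (- y)) * indicator {0<..1} (y / t)
        = ennreal (t powr (1 - a)) * ennreal (indicator {0..t} y *\<^sub>R (y powr (a - 1) * exp (- y)))"
      using t by (cases "0 < y \<and> y \<le> t") (auto simp: indicator_def field_simps ennreal_mult'[symmetric])
  qed
  also have "\<dots> = ennreal (t powr (1 - a)) * (\<integral>\<^sup>+y. ennreal (indicator {0..t} y *\<^sub>R (y powr (a - 1) * exp (- y))) \<partial>lborel)"
    by (rule nn_integral_cmult) measurable
  also have "(\<integral>\<^sup>+y. ennreal (indicator {0..t} y *\<^sub>R (y powr (a - 1) * exp (- y))) \<partial>lborel)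
      = ennreal (LINT y|lborel. indicator {0..t} y *\<^sub>R (y powr (a - 1) * exp (- y)))"
    using integrable_powr_exp_on_interval[OF a, of t] t
    by (intro nn_integral_eq_integral) (auto simp: indicator_def)
  also have "(LINT y|lborel. indicator {0..t} y *\<^sub>R (y powr (a - 1) * exp (- y))) = Gamma a * Ginc a t"
    unfolding Ginc_def set_lebesgue_integral_def using Gamma_real_pos[OF a] by simp
  finally show ?thesis
    using t a Gamma_real_pos[OF a] Ginc_nonneg[OF a, of t]
    by (simp add: ennreal_mult'[symmetric] powr_diff powr_minus_divide field_simps)
qed

lemma rhoPD_measurable[measurable]: "rhoPD a \<in> borel_measurable borel"
  unfolding rhoPD_def by measurable

lemma rhoPD_nonneg: "0 < a \<Longrightarrow> 0 \<le> rhoPD a x"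
  unfolding rhoPD_def by auto

lemma PsiPD_measurable[measurable]: "PsiPD a \<in> borel_measurable borel"
  unfolding PsiPD_def[abs_def] set_lebesgue_integral_def by measurable

lemma integrable_x_rhoPD:
  assumes "0 < a" "a < 1"
  shows "integrable lborel (\<lambda>x. x * rhoPD a x)"
proof (rule integrableI_nonneg)
  have "(\<integral>\<^sup>+x. ennreal (x * rhoPD a x) \<partial>lborel) = ennreal a * (\<integral>\<^sup>+x. ennreal (indicator {0..1} x * x powr (-a)) \<partial>lborel)"
    using assms by (subst nn_integral_cmult[symmetric])
      (auto intro!: nn_integral_cong simp: rhoPD_def indicator_def ennreal_mult[symmetric] powr_add[symmetric] powr_mult_base)
  also have "(\<integral>\<^sup>+x. ennreal (indicator {0..1} x * x powr (-a)) \<partial>lborel) = ennreal (1 powr (-a + 1) / (-a + 1))"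
    using has_integral_powr_from_0[of "-a" 1] assms by (intro nn_integral_has_integral_lebesgue) auto
  finally show "(\<integral>\<^sup>+x. ennreal (x * rhoPD a x) \<partial>lborel) < \<infinity>" by (simp add: ennreal_mult_less_top)
qed (use assms in \<open>auto simp: rhoPD_def\<close>)

lemma incseq_ennreal_one_minus_exp_div:
  fixes a y :: real assumes "0 \<le> a" "0 \<le> y"
  shows "incseq (\<lambda>m. ennreal (a * ((1 - exp (- (1 / Suc m) * y)) / (1 / Suc m))))"
  by (rule incseq_SucI, intro ennreal_leI mult_left_mono one_minus_exp_scaled_div_antimono)
    (use assms in \<open>auto simp: frac_le\<close>)

lemma SUP_ennreal_one_minus_exp_div:
  fixes a y :: real assumes "0 \<le> a" "0 \<le> y"
  shows "(SUP m. ennreal (a * ((1 - exp (- (1 / Suc m) * y)) / (1 / Suc m)))) = ennreal (a * y)"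
proof -
  have "filterlim (\<lambda>m. 1 / real (Suc m)) (at_right 0) sequentially"
    by (intro tendsto_imp_filterlim_at_right LIMSEQ_Suc[OF lim_const_over_n]) auto
  then have "(\<lambda>m. ennreal (a * ((1 - exp (- (1 / Suc m) * y)) / (1 / Suc m)))) \<longlonglongrightarrow> ennreal (a * y)"
    by (intro tendsto_ennrealI tendsto_mult tendsto_const filterlim_compose[OF tendsto_one_minus_exp_div])
  then show ?thesis
    using LIMSEQ_SUP[OF incseq_ennreal_one_minus_exp_div[OF assms]] LIMSEQ_unique by blast
qed

lemma nn_integral_triple_swap:
  fixes H :: "'a \<Rightarrow> 'b \<Rightarrow> 'c \<Rightarrow> ennreal"
  assumes "sigma_finite_measure M1" "sigma_finite_measure M2" "sigma_finite_measure M3"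
    and H: "(\<lambda>((x, t), w). H x w t) \<in> borel_measurable ((M1 \<Otimes>\<^sub>M M3) \<Otimes>\<^sub>M M2)"
    and H_x: "\<And>x. (\<lambda>(w, t). H x w t) \<in> borel_measurable (M2 \<Otimes>\<^sub>M M3)"
  shows "(\<integral>\<^sup>+x. \<integral>\<^sup>+w. \<integral>\<^sup>+t. H x w t \<partial>M3 \<partial>M2 \<partial>M1) = (\<integral>\<^sup>+t. \<integral>\<^sup>+x. \<integral>\<^sup>+w. H x w t \<partial>M2 \<partial>M1 \<partial>M3)"
    and "(\<lambda>t. \<integral>\<^sup>+x. \<integral>\<^sup>+w. H x w t \<partial>M2 \<partial>M1) \<in> borel_measurable M3"
proof -
  interpret M13: pair_sigma_finite M1 M3 by (simp add: pair_sigma_finite.intro assms)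
  interpret M23: pair_sigma_finite M2 M3 by (simp add: pair_sigma_finite.intro assms)
  have H_xt: "(\<lambda>(x, t). \<integral>\<^sup>+w. H x w t \<partial>M2) \<in> borel_measurable (M1 \<Otimes>\<^sub>M M3)"
    using M23.M1.borel_measurable_nn_integral[OF H] by (simp add: split_beta')
  have "(\<integral>\<^sup>+x. \<integral>\<^sup>+w. \<integral>\<^sup>+t. H x w t \<partial>M3 \<partial>M2 \<partial>M1) = (\<integral>\<^sup>+x. \<integral>\<^sup>+t. \<integral>\<^sup>+w. H x w t \<partial>M2 \<partial>M3 \<partial>M1)"
    using M23.Fubini'[OF H_x] by simp
  also have "\<dots> = (\<integral>\<^sup>+t. \<integral>\<^sup>+x. \<integral>\<^sup>+w. H x w t \<partial>M2 \<partial>M1 \<partial>M3)"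
    using M13.Fubini'[of "\<lambda>x t. \<integral>\<^sup>+w. H x w t \<partial>M2"] H_xt by (simp add: split_beta')
  finally show "(\<integral>\<^sup>+x. \<integral>\<^sup>+w. \<integral>\<^sup>+t. H x w t \<partial>M3 \<partial>M2 \<partial>M1) = (\<integral>\<^sup>+t. \<integral>\<^sup>+x. \<integral>\<^sup>+w. H x w t \<partial>M2 \<partial>M1 \<partial>M3)" .
  have "(\<lambda>(t, x). \<integral>\<^sup>+w. H x w t \<partial>M2) \<in> borel_measurable (M3 \<Otimes>\<^sub>M M1)"
    using H_xt by (subst measurable_pair_swap_iff) (simp add: split_beta')
  then show "(\<lambda>t. \<integral>\<^sup>+x. \<integral>\<^sup>+w. H x w t \<partial>M2 \<partial>M1) \<in> borel_measurable M3"
    using M13.M1.borel_measurable_nn_integral[of "\<lambda>t x. \<integral>\<^sup>+w. H x w t \<partial>M2" M3] by simp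
qed

section \<open>Sums over pairwise distinct indices\<close>

lemma nn_integral_count_space_nested:
  fixes f :: "'a \<Rightarrow> 'b \<Rightarrow> ennreal"
  assumes A: "countable A" and B: "countable B"
  shows "(\<integral>\<^sup>+a. \<integral>\<^sup>+b. f a b \<partial>count_space B \<partial>count_space A) = (\<integral>\<^sup>+p. f (fst p) (snd p) \<partial>count_space (A \<times> B))"
proof -
  interpret pair_sigma_finite "count_space A" "count_space B"
    by (simp add: pair_sigma_finite.intro sigma_finite_measure_count_space_countable A B)
  have "(\<lambda>p. f (fst p) (snd p)) \<in> borel_measurable (count_space A \<Otimes>\<^sub>M count_space B)"
    by (simp add: pair_measure_countable A B)
  from M2.nn_integral_fst[OF this] show ?thesis
    by (simp add: pair_measure_countable A B)
qed

definition inj_tuples :: "nat \<Rightarrow> (nat \<Rightarrow> nat) set" where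
  "inj_tuples k = {\<sigma> \<in> {..<k} \<rightarrow>\<^sub>E (UNIV::nat set). inj_on \<sigma> {..<k}}"

definition distinct_index_sum :: "nat \<Rightarrow> (nat \<Rightarrow> nat \<Rightarrow> ennreal) \<Rightarrow> ennreal" where
  "distinct_index_sum k W = (\<integral>\<^sup>+\<sigma>. (\<Prod>j<k. W j (\<sigma> j)) \<partial>count_space (inj_tuples k))"

lemma countable_inj_tuples: "countable (inj_tuples k)"
proof -
  have "countable ({..<k} \<rightarrow>\<^sub>E (UNIV::nat set))" by (rule countable_PiE) auto
  then show ?thesis unfolding inj_tuples_def by (rule countable_subset[rotated]) auto
qed

lemma distinct_index_sum_0: "distinct_index_sum 0 W = 1"
proof -
  have "inj_tuples 0 = {\<lambda>_. undefined}"
    unfolding inj_tuples_def by auto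
  then show ?thesis
    unfolding distinct_index_sum_def by (simp add: nn_integral_count_space_finite)
qed

lemma bij_betw_inj_tuples_Suc:
  "bij_betw (\<lambda>(\<sigma>, i). \<sigma>(k := i)) {(\<sigma>, i). \<sigma> \<in> inj_tuples k \<and> i \<notin> \<sigma> ` {..<k}} (inj_tuples (Suc k))"
  by (rule bij_betwI[where g="\<lambda>\<tau>. (\<tau>(k := undefined), \<tau> k)"])
     (auto simp: inj_tuples_def PiE_def extensional_def lessThan_Suc inj_on_def)

text \<open>Letting the new index run over all of \<open>\<nat>\<close>, it is either distinct from the \<open>k\<close> old ones or
  equal to exactly one old index \<open>j\<close>, in which case factor \<open>k\<close> merges into factor \<open>j\<close>.\<close>
lemma distinct_index_sum_Suc:
  "(\<Sum>i. W k i) * distinct_index_sum k W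
     = distinct_index_sum (Suc k) W + (\<Sum>j<k. distinct_index_sum k (W(j := (\<lambda>i. W j i * W k i))))"
proof -
  define \<phi> where "\<phi> \<sigma> i = (\<Prod>j<k. W j (\<sigma> j)) * W k i" for \<sigma> i
  let ?fresh = "\<lambda>\<sigma>. - (\<sigma> ` {..<k})"
  have split: "(\<integral>\<^sup>+i. \<phi> \<sigma> i \<partial>count_space UNIV)
      = (\<integral>\<^sup>+i. \<phi> \<sigma> i * indicator (?fresh \<sigma>) i \<partial>count_space UNIV)
        + (\<Sum>j<k. \<Prod>l<k. (W(j := (\<lambda>i. W j i * W k i))) l (\<sigma> l))"
    if "\<sigma> \<in> inj_tuples k" for \<sigma>
  proof -
    have inj: "inj_on \<sigma> {..<k}" using that by (auto simp: inj_tuples_def)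
    have "(\<integral>\<^sup>+i. \<phi> \<sigma> i \<partial>count_space UNIV)
        = (\<integral>\<^sup>+i. \<phi> \<sigma> i * indicator (?fresh \<sigma>) i + \<phi> \<sigma> i * indicator (\<sigma> ` {..<k}) i \<partial>count_space UNIV)"
      by (intro nn_integral_cong) (auto simp: indicator_def)
    also have "\<dots> = (\<integral>\<^sup>+i. \<phi> \<sigma> i * indicator (?fresh \<sigma>) i \<partial>count_space UNIV)
        + (\<integral>\<^sup>+i. \<phi> \<sigma> i * indicator (\<sigma> ` {..<k}) i \<partial>count_space UNIV)"
      by (rule nn_integral_add) auto
    also have "(\<integral>\<^sup>+i. \<phi> \<sigma> i * indicator (\<sigma> ` {..<k}) i \<partial>count_space UNIV) = (\<Sum>j<k. \<phi> \<sigma> (\<sigma> j))"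
      using inj by (simp add: nn_integral_count_space_indicator[symmetric] nn_integral_count_space_finite sum.reindex)
    also have "\<dots> = (\<Sum>j<k. \<Prod>l<k. (W(j := (\<lambda>i. W j i * W k i))) l (\<sigma> l))"
    proof (rule sum.cong)
      fix j assume j: "j \<in> {..<k}"
      have "(\<Prod>l<k. (W(j := (\<lambda>i. W j i * W k i))) l (\<sigma> l))
          = (W j (\<sigma> j) * W k (\<sigma> j)) * (\<Prod>l\<in>{..<k}-{j}. W l (\<sigma> l))"
        using j by (subst prod.remove[of _ j]) (auto intro!: prod.cong)
      also have "\<dots> = \<phi> \<sigma> (\<sigma> j)"
        using j unfolding \<phi>_def by (subst prod.remove[of _ j]) (auto simp: ac_simps)
      finally show "\<phi> \<sigma> (\<sigma> j) = (\<Prod>l<k. (W(j := (\<lambda>i. W j i * W k i))) l (\<sigma> l))" by simp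
    qed simp
    finally show ?thesis .
  qed
  have fresh: "(\<integral>\<^sup>+\<sigma>. \<integral>\<^sup>+i. \<phi> \<sigma> i * indicator (?fresh \<sigma>) i \<partial>count_space UNIV \<partial>count_space (inj_tuples k))
      = distinct_index_sum (Suc k) W"
  proof -
    have "(\<integral>\<^sup>+\<sigma>. \<integral>\<^sup>+i. \<phi> \<sigma> i * indicator (?fresh \<sigma>) i \<partial>count_space UNIV \<partial>count_space (inj_tuples k))
        = (\<integral>\<^sup>+p. \<phi> (fst p) (snd p) * indicator (?fresh (fst p)) (snd p) \<partial>count_space (inj_tuples k \<times> UNIV))"
      by (rule nn_integral_count_space_nested[OF countable_inj_tuples]) simp
    also have "\<dots> = (\<integral>\<^sup>+p. \<phi> (fst p) (snd p) \<partial>count_space {(\<sigma>, i). \<sigma> \<in> inj_tuples k \<and> i \<notin> \<sigma> ` {..<k}})"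
      by (subst (1 2) nn_integral_count_space_indicator) (auto intro!: nn_integral_cong simp: indicator_def)
    also have "\<dots> = (\<integral>\<^sup>+p. (\<lambda>\<tau>. \<Prod>j<Suc k. W j (\<tau> j)) ((\<lambda>(\<sigma>, i). \<sigma>(k := i)) p)
        \<partial>count_space {(\<sigma>, i). \<sigma> \<in> inj_tuples k \<and> i \<notin> \<sigma> ` {..<k}})"
      unfolding \<phi>_def by (intro nn_integral_cong) (auto simp: lessThan_Suc mult.commute intro!: prod.cong)
    also have "\<dots> = distinct_index_sum (Suc k) W"
      unfolding distinct_index_sum_def by (rule nn_integral_bij_count_space[OF bij_betw_inj_tuples_Suc])
    finally show ?thesis .
  qed
  have "(\<Sum>i. W k i) * distinct_index_sum k W
      = (\<integral>\<^sup>+\<sigma>. \<integral>\<^sup>+i. \<phi> \<sigma> i \<partial>count_space UNIV \<partial>count_space (inj_tuples k))"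
    unfolding distinct_index_sum_def \<phi>_def nn_integral_count_space_nat
    by (simp add: nn_integral_cmult mult.commute)
  also have "\<dots> = (\<integral>\<^sup>+\<sigma>. (\<integral>\<^sup>+i. \<phi> \<sigma> i * indicator (?fresh \<sigma>) i \<partial>count_space UNIV)
      + (\<Sum>j<k. \<Prod>l<k. (W(j := (\<lambda>i. W j i * W k i))) l (\<sigma> l)) \<partial>count_space (inj_tuples k))"
    by (intro nn_integral_cong split) simp
  also have "\<dots> = (\<integral>\<^sup>+\<sigma>. \<integral>\<^sup>+i. \<phi> \<sigma> i * indicator (?fresh \<sigma>) i \<partial>count_space UNIV \<partial>count_space (inj_tuples k))
      + (\<Sum>j<k. distinct_index_sum k (W(j := (\<lambda>i. W j i * W k i))))"
    unfolding distinct_index_sum_def by (subst nn_integral_add) (auto simp: nn_integral_sum)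
  finally show ?thesis unfolding fresh .
qed

section \<open>Blocks of a set partition\<close>

locale blocks =
  fixes n k :: nat and A :: "nat \<Rightarrow> nat set"
  assumes A_ne: "\<And>i. i < k \<Longrightarrow> A i \<noteq> {}"
    and A_disj: "\<And>i j. i < k \<Longrightarrow> j < k \<Longrightarrow> i \<noteq> j \<Longrightarrow> A i \<inter> A j = {}"
    and A_cover: "(\<Union>i<k. A i) = {1..n}"
begin

definition block_of :: "nat \<Rightarrow> nat" where
  "block_of l = (THE j. j < k \<and> l \<in> A j)"

lemma block_subset: "j < k \<Longrightarrow> A j \<subseteq> {1..n}"
  using A_cover by auto

lemma finite_block: "j < k \<Longrightarrow> finite (A j)"
  using block_subset finite_subset by blast

lemma card_block_pos: "j < k \<Longrightarrow> 0 < card (A j)"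
  using A_ne finite_block by (simp add: card_gt_0_iff)

lemma sum_card_blocks: "(\<Sum>j<k. card (A j)) = n"
proof -
  have "card (\<Union>j<k. A j) = (\<Sum>j<k. card (A j))"
    by (rule card_UN_disjoint) (auto simp: finite_block A_disj)
  then show ?thesis using A_cover by simp
qed

lemma n_pos: "1 \<le> k \<Longrightarrow> 0 < n"
  using sum_card_blocks card_block_pos[of 0] member_le_sum[of 0 "{..<k}" "\<lambda>j. card (A j)"] by auto

lemma block_of_eq: "j < k \<Longrightarrow> l \<in> A j \<Longrightarrow> block_of l = j"
  unfolding block_of_def using A_disj by (intro the_equality) blast+

lemma block_of: "l \<in> {1..n} \<Longrightarrow> block_of l < k \<and> l \<in> A (block_of l)"
proof -
  assume "l \<in> {1..n}"
  then have "l \<in> (\<Union>i<k. A i)" using A_cover by simp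
  then obtain j where "j < k" "l \<in> A j" by blast
  then show ?thesis using block_of_eq by auto
qed

lemma induced_partition_eq_blocks:
  assumes x: "\<And>l l'. l \<in> {1..n} \<Longrightarrow> l' \<in> {1..n} \<Longrightarrow> x l = x l' \<longleftrightarrow> block_of l = block_of l'"
  shows "induced_partition n x = A ` {..<k}"
proof -
  let ?R = "{(l, l'). l \<in> {1..n} \<and> l' \<in> {1..n} \<and> x l = x l'}"
  have eq_class: "?R `` {l} = A (block_of l)" if l: "l \<in> {1..n}" for l
  proof (intro equalityI subsetI)
    fix l' assume "l' \<in> ?R `` {l}"
    then have "l' \<in> {1..n}" "block_of l = block_of l'" using x[OF l] by auto
    then show "l' \<in> A (block_of l)" using block_of[of l'] by simp
  next
    fix l' assume l': "l' \<in> A (block_of l)"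
    have "block_of l < k" using block_of[OF l] by simp
    with l' have "l' \<in> {1..n}" "block_of l' = block_of l" using block_subset block_of_eq by blast+
    then show "l' \<in> ?R `` {l}" using x[OF l] l by auto
  qed
  have "induced_partition n x = (\<lambda>l. A (block_of l)) ` {1..n}"
    unfolding induced_partition_def quotient_def using eq_class by auto
  also have "\<dots> = A ` {..<k}"
  proof (intro equalityI subsetI)
    fix B assume "B \<in> A ` {..<k}"
    then obtain j where j: "j < k" "B = A j" by auto
    then obtain l where "l \<in> A j" using A_ne by auto
    then show "B \<in> (\<lambda>l. A (block_of l)) ` {1..n}" using j block_of_eq block_subset by force
  qed (use block_of in auto)
  finally show ?thesis .
qed

lemma same_label_iff_same_block:
  assumes "induced_partition n x = A ` {..<k}" "l \<in> {1..n}" "l' \<in> {1..n}"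
  shows "x l = x l' \<longleftrightarrow> block_of l = block_of l'"
proof -
  let ?R = "{(l, l'). l \<in> {1..n} \<and> l' \<in> {1..n} \<and> x l = x l'}"
  have "?R `` {l} \<in> induced_partition n x"
    unfolding induced_partition_def quotient_def using assms(2) by auto
  then obtain j where j: "j < k" "?R `` {l} = A j" using assms(1) by auto
  moreover have "l \<in> ?R `` {l}" using assms(2) by auto
  ultimately have "?R `` {l} = A (block_of l)" using block_of_eq by auto
  then have "x l = x l' \<longleftrightarrow> l' \<in> A (block_of l)" using assms(2,3) by auto
  also have "\<dots> \<longleftrightarrow> block_of l = block_of l'"
    using block_of[OF assms(2)] block_of[OF assms(3)] block_of_eq by metis
  finally show ?thesis .
qed

definition label_by_block :: "(nat \<Rightarrow> nat) \<Rightarrow> nat \<Rightarrow> nat" where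
  "label_by_block \<sigma> = (\<lambda>l. if l \<in> {1..n} then \<sigma> (block_of l) else undefined)"

text \<open>The inverse reads off the label of each block at a representative element.\<close>
lemma bij_betw_label_by_block:
  "bij_betw label_by_block (inj_tuples k)
     {x \<in> {1..n} \<rightarrow>\<^sub>E (UNIV::nat set). induced_partition n x = A ` {..<k}}"
proof -
  define rep where "rep j = (SOME l. l \<in> A j)" for j
  have rep: "j < k \<Longrightarrow> rep j \<in> A j" for j using A_ne unfolding rep_def by (meson ex_in_conv someI_ex)
  have rep_block: "j < k \<Longrightarrow> block_of (rep j) = j" for j using rep block_of_eq by auto
  have rep_range: "j < k \<Longrightarrow> rep j \<in> {1..n}" for j using rep block_subset by blast
  show ?thesis
  proof (rule bij_betwI[where g="\<lambda>x. \<lambda>j\<in>{..<k}. x (rep j)"])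
    show "label_by_block \<in> inj_tuples k \<rightarrow> {x \<in> {1..n} \<rightarrow>\<^sub>E UNIV. induced_partition n x = A ` {..<k}}"
    proof
      fix \<sigma> assume "\<sigma> \<in> inj_tuples k"
      then have "induced_partition n (label_by_block \<sigma>) = A ` {..<k}"
        using block_of by (intro induced_partition_eq_blocks) (auto simp: label_by_block_def inj_tuples_def inj_on_def)
      then show "label_by_block \<sigma> \<in> {x \<in> {1..n} \<rightarrow>\<^sub>E UNIV. induced_partition n x = A ` {..<k}}"
        by (auto simp: label_by_block_def)
    qed
    show "(\<lambda>x. \<lambda>j\<in>{..<k}. x (rep j)) \<in> {x \<in> {1..n} \<rightarrow>\<^sub>E UNIV. induced_partition n x = A ` {..<k}} \<rightarrow> inj_tuples k"
    proof
      fix x assume x: "x \<in> {x \<in> {1..n} \<rightarrow>\<^sub>E UNIV. induced_partition n x = A ` {..<k}}"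
      have "inj_on (\<lambda>j. x (rep j)) {..<k}"
        using same_label_iff_same_block[of x] x rep_range rep_block by (auto simp: inj_on_def)
      then show "(\<lambda>j\<in>{..<k}. x (rep j)) \<in> inj_tuples k"
        unfolding inj_tuples_def by (auto simp: inj_on_def)
    qed
    show "(\<lambda>j\<in>{..<k}. label_by_block \<sigma> (rep j)) = \<sigma>" if "\<sigma> \<in> inj_tuples k" for \<sigma>
      using that rep_range rep_block
      by (auto simp: fun_eq_iff label_by_block_def inj_tuples_def PiE_def extensional_def)
    show "label_by_block (\<lambda>j\<in>{..<k}. x (rep j)) = x"
      if x: "x \<in> {x \<in> {1..n} \<rightarrow>\<^sub>E UNIV. induced_partition n x = A ` {..<k}}" for x
    proof
      fix l show "label_by_block (\<lambda>j\<in>{..<k}. x (rep j)) l = x l"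
      proof (cases "l \<in> {1..n}")
        case True
        then show ?thesis
          using x same_label_iff_same_block[of x "rep (block_of l)" l] block_of[OF True] rep_range rep_block
          by (auto simp: label_by_block_def)
      qed (use x in \<open>auto simp: label_by_block_def PiE_def extensional_def\<close>)
    qed
  qed
qed

lemma sample_partition_prob_blocks:
  "sample_partition_prob P n (A ` {..<k}) = distinct_index_sum k (\<lambda>j i. ennreal (P i) ^ card (A j))"
proof -
  let ?X = "{x \<in> {1..n} \<rightarrow>\<^sub>E (UNIV::nat set). induced_partition n x = A ` {..<k}}"
  have "sample_partition_prob P n (A ` {..<k}) = (\<integral>\<^sup>+x. (\<Prod>l\<in>{1..n}. ennreal (P (x l))) \<partial>count_space ?X)"
    unfolding sample_partition_prob_def
    by (subst (1 2) nn_integral_count_space_indicator) (auto intro!: nn_integral_cong simp: indicator_def)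
  also have "\<dots> = (\<integral>\<^sup>+\<sigma>. (\<Prod>l\<in>{1..n}. ennreal (P (label_by_block \<sigma> l))) \<partial>count_space (inj_tuples k))"
    by (rule nn_integral_bij_count_space[OF bij_betw_label_by_block, symmetric])
  also have "\<dots> = distinct_index_sum k (\<lambda>j i. ennreal (P i) ^ card (A j))"
    unfolding distinct_index_sum_def
  proof (rule nn_integral_cong)
    fix \<sigma>
    have "(\<Prod>l\<in>{1..n}. ennreal (P (label_by_block \<sigma> l))) = (\<Prod>j<k. \<Prod>l\<in>A j. ennreal (P (label_by_block \<sigma> l)))"
      unfolding A_cover[symmetric] by (rule prod.UNION_disjoint) (auto simp: finite_block A_disj)
    also have "\<dots> = (\<Prod>j<k. ennreal (P (\<sigma> j)) ^ card (A j))"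
      using block_subset block_of_eq by (intro prod.cong refl) (auto simp: label_by_block_def subset_iff)
    finally show "(\<Prod>l\<in>{1..n}. ennreal (P (label_by_block \<sigma> l))) = (\<Prod>j<k. ennreal (P (\<sigma> j)) ^ card (A j))" .
  qed
  finally show ?thesis .
qed

lemma sample_partition_prob_gamma_integral:
  assumes k: "1 \<le> k" and T: "0 < T" and x: "\<And>i. 0 \<le> x i"
  shows "sample_partition_prob (\<lambda>i. x i / T) n (A ` {..<k})
    = (\<integral>\<^sup>+t\<in>{0<..}. ennreal (t ^ (n - 1) / fact (n - 1) * exp (- t * T))
        * distinct_index_sum k (\<lambda>j i. ennreal (x i ^ card (A j))) \<partial>lborel)"
proof -
  let ?c = "\<lambda>t. ennreal (t ^ (n - 1) / fact (n - 1) * exp (- t * T))"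
  have pow: "ennreal (x i / T) ^ m = ennreal (x i ^ m) * ennreal (1 / T ^ m)" for i m
    using x[of i] T by (simp add: ennreal_power ennreal_mult[symmetric] power_divide)
  have T_n: "(\<Prod>j<k. 1 / T ^ card (A j)) = 1 / T ^ n"
    unfolding sum_card_blocks[symmetric] power_sum by (simp add: prod_dividef)
  have "(\<Prod>j<k. ennreal (x (\<sigma> j) / T) ^ card (A j))
      = (\<Prod>j<k. ennreal (x (\<sigma> j) ^ card (A j))) * ennreal (1 / T ^ n)" for \<sigma>
    using T by (simp add: pow prod.distrib prod_ennreal T_n)
  then have "sample_partition_prob (\<lambda>i. x i / T) n (A ` {..<k})
      = (\<integral>\<^sup>+\<sigma>. (\<Prod>j<k. ennreal (x (\<sigma> j) ^ card (A j))) * ennreal (1 / T ^ n) \<partial>count_space (inj_tuples k))"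
    unfolding sample_partition_prob_blocks distinct_index_sum_def by simp
  also have "\<dots> = (\<integral>\<^sup>+\<sigma>. (\<integral>\<^sup>+t. (\<Prod>j<k. ennreal (x (\<sigma> j) ^ card (A j))) * (?c t * indicator {0<..} t) \<partial>lborel)
      \<partial>count_space (inj_tuples k))"
    unfolding inverse_power_eq_gamma_integral[OF T n_pos[OF k]]
    by (intro nn_integral_cong nn_integral_cmult[symmetric]) measurable
  also have "\<dots> = (\<integral>\<^sup>+t. (\<integral>\<^sup>+\<sigma>. (\<Prod>j<k. ennreal (x (\<sigma> j) ^ card (A j))) \<partial>count_space (inj_tuples k)) * (?c t * indicator {0<..} t) \<partial>lborel)"
    by (subst nn_integral_count_space_nn_integral[OF countable_inj_tuples, symmetric]) (simp_all add: nn_integral_multc)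
  finally show ?thesis
    unfolding distinct_index_sum_def by (simp add: mult_ac)
qed

end

section \<open>The jump sequence of a negative binomial point process\<close>

lemma (in prob_space) AE_eq_1_if_nn_integral_eq_1:
  assumes [measurable]: "X \<in> borel_measurable M"
    and bounds: "\<And>\<omega>. 0 \<le> X \<omega>" "\<And>\<omega>. X \<omega> \<le> 1"
    and one: "(\<integral>\<^sup>+\<omega>. ennreal (X \<omega>) \<partial>M) = 1"
  shows "AE \<omega> in M. X \<omega> = 1"
proof -
  have int: "integrable M X"
    by (rule integrable_const_bound[where B=1]) (use bounds in auto)
  have "integral\<^sup>L M X = 1"
    using one bounds by (subst integral_eq_nn_integral) auto
  then have "integral\<^sup>L M (\<lambda>\<omega>. 1 - X \<omega>) = 0"
    using int by (simp add: prob_space)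
  then have "AE \<omega> in M. 1 - X \<omega> = 0"
    using int bounds by (subst integral_nonneg_eq_0_iff_AE[symmetric]) auto
  then show ?thesis by auto
qed

lemma expneg_measurable[measurable]: "expneg \<in> borel_measurable borel"
  unfolding expneg_def[abs_def] by measurable

lemma expneg_nonneg: "0 \<le> expneg b"
  and expneg_le_1: "expneg b \<le> 1"
  unfolding expneg_def by auto

lemma expneg_eq_1_iff: "expneg b = 1 \<longleftrightarrow> b = 0"
  unfolding expneg_def by (auto simp: enn2real_eq_0_iff)

lemma expneg_add:
  assumes "c \<noteq> \<top>" shows "expneg (b + c) = expneg b * exp (- enn2real c)"
  using assms unfolding expneg_def
  by (cases "b = \<top>") (auto simp: enn2real_plus less_top exp_add[symmetric])

locale neg_binomial_jumps = prob_space M for M :: "'a measure" +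
  fixes \<alpha> r :: real and J :: "'a \<Rightarrow> nat \<Rightarrow> real"
  assumes alpha: "0 < \<alpha>" "\<alpha> < 1" and r: "0 < r"
    and J_measurable[measurable]: "\<And>i. (\<lambda>\<omega>. J \<omega> i) \<in> borel_measurable M"
    and J_ranked: "AE \<omega> in M. decseq (J \<omega>) \<and> (\<forall>i. 0 < J \<omega> i) \<and> summable (J \<omega>)"
    and J_NB: "\<And>f. f \<in> borel_measurable borel \<Longrightarrow> (\<forall>x. 0 \<le> f x) \<Longrightarrow>
        (\<integral>\<^sup>+\<omega>. ennreal (expneg (\<Sum>i. ennreal (f (J \<omega> i)))) \<partial>M) = ennreal (NB_laplace \<alpha> r f)"
begin

abbreviation rho :: "real \<Rightarrow> real" where
  "rho \<equiv> rhoPD \<alpha>"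

text \<open>The growth bounds near \<open>0\<close> make all the \<open>\<Lambda>\<close>-integrals below finite, as \<open>\<integral> x \<rho>(x) dx < \<infinity>\<close>.\<close>
definition adm_exponent :: "(real \<Rightarrow> real) \<Rightarrow> bool" where
  "adm_exponent f \<longleftrightarrow> f \<in> borel_measurable borel \<and> (\<forall>x. 0 \<le> f x) \<and> (\<exists>c. \<forall>x. 0 < x \<longrightarrow> x \<le> 1 \<longrightarrow> f x \<le> c * x)"

definition adm_factor :: "(real \<Rightarrow> real) \<Rightarrow> bool" where
  "adm_factor h \<longleftrightarrow> h \<in> borel_measurable borel \<and> (\<forall>x. 0 \<le> h x) \<and> (\<forall>x. 0 < x \<longrightarrow> x \<le> 1 \<longrightarrow> h x \<le> x)"

definition Phi :: "(real \<Rightarrow> real) \<Rightarrow> real" where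
  "Phi f = 1 + (LINT x|lborel. (1 - exp (- f x)) * rho x)"

definition tilted_integral :: "(real \<Rightarrow> real) \<Rightarrow> (real \<Rightarrow> real) \<Rightarrow> real" where
  "tilted_integral f h = (LINT x|lborel. exp (- f x) * h x * rho x)"

definition point_sum :: "(real \<Rightarrow> real) \<Rightarrow> 'a \<Rightarrow> ennreal" where
  "point_sum f \<omega> = (\<Sum>i. ennreal (f (J \<omega> i)))"

definition distinct_point_sum :: "nat \<Rightarrow> (nat \<Rightarrow> real \<Rightarrow> real) \<Rightarrow> 'a \<Rightarrow> ennreal" where
  "distinct_point_sum k h \<omega> = distinct_index_sum k (\<lambda>j i. ennreal (h j (J \<omega> i)))"

text \<open>\<open>moment k f h\<close> is the left-hand side of the moment formula, \<open>moment_formula k f h\<close> its right-hand side.\<close>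
definition moment :: "nat \<Rightarrow> (real \<Rightarrow> real) \<Rightarrow> (nat \<Rightarrow> real \<Rightarrow> real) \<Rightarrow> ennreal" where
  "moment k f h = (\<integral>\<^sup>+\<omega>. ennreal (expneg (point_sum f \<omega>)) * distinct_point_sum k h \<omega> \<partial>M)"

definition moment_formula :: "nat \<Rightarrow> (real \<Rightarrow> real) \<Rightarrow> (nat \<Rightarrow> real \<Rightarrow> real) \<Rightarrow> real" where
  "moment_formula k f h = pochhammer r k * Phi f powr (- (r + real k)) * (\<Prod>j<k. tilted_integral f (h j))"

definition regular_jumps :: "'a \<Rightarrow> bool" where
  "regular_jumps \<omega> \<longleftrightarrow> (\<forall>i. 0 < J \<omega> i \<and> J \<omega> i \<le> 1) \<and> summable (J \<omega>)"

lemma rho_nonneg: "0 \<le> rho x"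
  using alpha(1) by (rule rhoPD_nonneg)

lemma rho_support: "rho x \<noteq> 0 \<Longrightarrow> 0 < x \<and> x \<le> 1"
  unfolding rhoPD_def by (auto split: if_splits)

lemma adm_exponentD:
  assumes "adm_exponent f"
  shows "f \<in> borel_measurable borel" "\<And>x. 0 \<le> f x" "\<exists>c\<ge>0. \<forall>x. 0 < x \<longrightarrow> x \<le> 1 \<longrightarrow> f x \<le> c * x"
proof -
  show "f \<in> borel_measurable borel" "\<And>x. 0 \<le> f x" using assms by (auto simp: adm_exponent_def)
  obtain c where c: "\<forall>x. 0 < x \<longrightarrow> x \<le> 1 \<longrightarrow> f x \<le> c * x" using assms by (auto simp: adm_exponent_def)
  moreover have "0 \<le> c" using c[rule_format, of 1] assms by (auto simp: adm_exponent_def intro: order.trans)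
  ultimately show "\<exists>c\<ge>0. \<forall>x. 0 < x \<longrightarrow> x \<le> 1 \<longrightarrow> f x \<le> c * x" by blast
qed

lemma adm_factorD:
  assumes "adm_factor h"
  shows "h \<in> borel_measurable borel" "\<And>x. 0 \<le> h x" "\<And>x. 0 < x \<Longrightarrow> x \<le> 1 \<Longrightarrow> h x \<le> x"
  using assms by (auto simp: adm_factor_def)

lemma adm_exponent_add:
  assumes f: "adm_exponent f" and u: "adm_factor u" and s: "0 \<le> s"
  shows "adm_exponent (\<lambda>x. f x + s * u x)"
proof -
  obtain c where c: "c \<ge> 0" "\<forall>x. 0 < x \<longrightarrow> x \<le> 1 \<longrightarrow> f x \<le> c * x" using adm_exponentD(3)[OF f] by blast
  note [measurable] = adm_exponentD(1)[OF f] adm_factorD(1)[OF u]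
  have "f x + s * u x \<le> (c + s) * x" if "0 < x" "x \<le> 1" for x
  proof -
    have "f x \<le> c * x" using c(2) that by blast
    moreover have "s * u x \<le> s * x" using mult_left_mono[OF adm_factorD(3)[OF u that] s] .
    ultimately show ?thesis by (simp add: distrib_right)
  qed
  then show ?thesis
    unfolding adm_exponent_def using adm_exponentD(2)[OF f] adm_factorD(2)[OF u] s by (auto intro!: exI[of _ "c + s"])
qed

lemma adm_factor_mult:
  assumes h: "adm_factor h" and u: "adm_factor u" shows "adm_factor (\<lambda>x. h x * u x)"
proof -
  note [measurable] = adm_factorD(1)[OF h] adm_factorD(1)[OF u]
  have "h x * u x \<le> x * 1" if "0 < x" "x \<le> 1" for x
  proof -
    have "u x \<le> 1" using adm_factorD(3)[OF u that] that by linarith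
    then show ?thesis using adm_factorD[OF h] adm_factorD(2)[OF u] that by (intro mult_mono) auto
  qed
  then show ?thesis
    unfolding adm_factor_def using adm_factorD(2)[OF h] adm_factorD(2)[OF u] by auto
qed

lemma adm_exponent_scaled_abs: "0 \<le> t \<Longrightarrow> adm_exponent (\<lambda>x. t * \<bar>x\<bar>)"
  unfolding adm_exponent_def by (auto intro!: exI[of _ t])

lemma adm_factor_abs: "adm_factor (\<lambda>x. \<bar>x\<bar>)"
  unfolding adm_factor_def by auto

lemma adm_factor_abs_power: "0 < m \<Longrightarrow> adm_factor (\<lambda>x. \<bar>x\<bar> ^ m)"
  unfolding adm_factor_def by (auto intro: order.trans[OF power_decreasing[of 1]])

lemma integrable_Phi_integrand:
  assumes "adm_exponent f" shows "integrable lborel (\<lambda>x. (1 - exp (- f x)) * rho x)"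
proof -
  obtain c where c: "c \<ge> 0" "\<And>x. 0 < x \<Longrightarrow> x \<le> 1 \<Longrightarrow> f x \<le> c * x" using adm_exponentD(3)[OF assms] by auto
  show ?thesis
  proof (rule Bochner_Integration.integrable_bound)
  show "integrable lborel (\<lambda>x. c * (x * rho x))" using integrable_x_rhoPD[OF alpha] by simp
  show "(\<lambda>x. (1 - exp (- f x)) * rho x) \<in> borel_measurable lborel"
    using adm_exponentD(1)[OF assms] by measurable
  have "norm ((1 - exp (- f x)) * rho x) \<le> norm (c * (x * rho x))" for x
  proof (cases "rho x = 0")
    case False
    then have x: "0 < x" "x \<le> 1" using rho_support by auto
    have "0 \<le> 1 - exp (- f x)" "1 - exp (- f x) \<le> c * x"
      using adm_exponentD(2)[OF assms, of x] one_minus_exp_neg_le[of "f x"] c(2)[OF x] by auto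
    then have "(1 - exp (- f x)) * rho x \<le> (c * x) * rho x" "0 \<le> (1 - exp (- f x)) * rho x"
      using rho_nonneg[of x] by (auto intro: mult_right_mono)
    then show ?thesis using rho_nonneg[of x] x c(1) by (simp add: abs_mult)
  qed simp
  then show "AE x in lborel. norm ((1 - exp (- f x)) * rho x) \<le> norm (c * (x * rho x))" by simp
  qed
qed

lemma integrable_tilted_integrand:
  assumes "adm_exponent f" "adm_factor h" shows "integrable lborel (\<lambda>x. exp (- f x) * h x * rho x)"
proof (rule Bochner_Integration.integrable_bound)
  show "integrable lborel (\<lambda>x. x * rho x)" using integrable_x_rhoPD[OF alpha] .
  show "(\<lambda>x. exp (- f x) * h x * rho x) \<in> borel_measurable lborel"
    using adm_exponentD(1)[OF assms(1)] adm_factorD(1)[OF assms(2)] by measurable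
  have "norm (exp (- f x) * h x * rho x) \<le> norm (x * rho x)" for x
  proof (cases "rho x = 0")
    case False
    then have x: "0 < x" "x \<le> 1" using rho_support by auto
    have "exp (- f x) * h x \<le> 1 * x"
      using adm_exponentD(2)[OF assms(1), of x] adm_factorD[OF assms(2)] x by (intro mult_mono) auto
    then show ?thesis
      using rho_nonneg[of x] x adm_factorD(2)[OF assms(2), of x] by (simp add: abs_mult mult_right_mono)
  qed simp
  then show "AE x in lborel. norm (exp (- f x) * h x * rho x) \<le> norm (x * rho x)" by simp
qed

lemma Phi_ge_1: "adm_exponent f \<Longrightarrow> 1 \<le> Phi f"
  unfolding Phi_def using adm_exponentD(2) rho_nonneg
  by (auto intro!: integral_nonneg_AE AE_I2 mult_nonneg_nonneg)

lemma tilted_integral_nonneg: "adm_factor h \<Longrightarrow> 0 \<le> tilted_integral f h"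
  unfolding tilted_integral_def using adm_factorD(2) rho_nonneg
  by (auto intro!: integral_nonneg_AE AE_I2 mult_nonneg_nonneg)

lemma moment_formula_nonneg:
  "adm_exponent f \<Longrightarrow> (\<And>j. j < k \<Longrightarrow> adm_factor (h j)) \<Longrightarrow> 0 \<le> moment_formula k f h"
  unfolding moment_formula_def using r
  by (auto intro!: mult_nonneg_nonneg prod_nonneg tilted_integral_nonneg pochhammer_nonneg)

lemma NB_laplace_eq_Phi:
  assumes "adm_exponent f" shows "NB_laplace \<alpha> r f = Phi f powr (- r)"
proof -
  have nonneg: "0 \<le> (1 - exp (- f x)) * rho x" for x
    using adm_exponentD(2)[OF assms, of x] rho_nonneg[of x] by simp
  have "(\<integral>\<^sup>+x. ennreal ((1 - exp (- f x)) * rho x) \<partial>lborel) = ennreal (LINT x|lborel. (1 - exp (- f x)) * rho x)"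
    using integrable_Phi_integrand[OF assms] nonneg by (intro nn_integral_eq_integral) auto
  moreover have "0 \<le> (LINT x|lborel. (1 - exp (- f x)) * rho x)"
    using nonneg by (rule integral_nonneg_AE[OF AE_I2])
  ultimately show ?thesis unfolding NB_laplace_def Phi_def Let_def by simp
qed

lemma Phi_scaled_abs: "Phi (\<lambda>x. t * \<bar>x\<bar>) = PsiPD \<alpha> t"
proof -
  have "(LINT x|lborel. (1 - exp (- (t * \<bar>x\<bar>))) * rho x) =
      (LINT x|lborel. \<alpha> * (indicator {0<..1} x *\<^sub>R ((1 - exp (- t * x)) * x powr (- \<alpha> - 1))))"
    by (rule Bochner_Integration.integral_cong[OF refl]) (auto simp: rhoPD_def indicator_def)
  then show ?thesis unfolding Phi_def PsiPD_def set_lebesgue_integral_def by simp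
qed

lemma point_sum_measurable[measurable]:
  assumes [measurable]: "f \<in> borel_measurable borel" shows "point_sum f \<in> borel_measurable M"
  unfolding point_sum_def[abs_def] by measurable

lemma distinct_point_sum_measurable[measurable]:
  assumes "\<And>j. j < k \<Longrightarrow> h j \<in> borel_measurable borel"
  shows "distinct_point_sum k h \<in> borel_measurable M"
proof -
  interpret sigma_finite_measure "count_space (inj_tuples k)"
    by (rule sigma_finite_measure_count_space_countable[OF countable_inj_tuples])
  have "(\<lambda>(\<sigma>, \<omega>). \<Prod>j<k. ennreal (h j (J \<omega> (\<sigma> j)))) \<in> borel_measurable (count_space (inj_tuples k) \<Otimes>\<^sub>M M)"
  proof (rule measurable_pair_measure_countable1[OF countable_inj_tuples])
    fix \<sigma>
    have [measurable]: "h j \<in> borel_measurable borel" if "j \<in> {..<k}" for j using assms that by auto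
    show "(\<lambda>\<omega>. case (\<sigma>, \<omega>) of (\<sigma>, \<omega>) \<Rightarrow> \<Prod>j<k. ennreal (h j (J \<omega> (\<sigma> j)))) \<in> borel_measurable M"
      unfolding prod.case by (rule borel_measurable_prod_ennreal) measurable
  qed
  then have "(\<lambda>(\<omega>, \<sigma>). \<Prod>j<k. ennreal (h j (J \<omega> (\<sigma> j)))) \<in> borel_measurable (M \<Otimes>\<^sub>M count_space (inj_tuples k))"
    by (subst measurable_pair_swap_iff) simp
  then show ?thesis
    unfolding distinct_point_sum_def[abs_def] distinct_index_sum_def by measurable
qed

section \<open>The moment formula\<close>

lemma AE_J_le_1: "AE \<omega> in M. \<forall>i. J \<omega> i \<le> 1"
proof -
  define f :: "real \<Rightarrow> real" where "f = indicator {1<..}"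
  have [measurable]: "f \<in> borel_measurable borel" unfolding f_def by measurable
  have f_nonneg: "\<forall>x. 0 \<le> f x" unfolding f_def by auto
  have "(\<lambda>x. ennreal ((1 - exp (- f x)) * rho x)) = (\<lambda>x. 0)"
  proof (rule ext)
    fix x :: real
    show "ennreal ((1 - exp (- f x)) * rho x) = 0"
    proof (cases "1 < x")
      case True then show ?thesis by (simp add: rhoPD_def)
    next
      case False then show ?thesis by (simp add: f_def)
    qed
  qed
  then have "(\<integral>\<^sup>+x. ennreal ((1 - exp (- f x)) * rho x) \<partial>lborel) = 0"
    by simp
  then have "NB_laplace \<alpha> r f = 1"
    unfolding NB_laplace_def Let_def by simp
  then have "(\<integral>\<^sup>+\<omega>. ennreal (expneg (point_sum f \<omega>)) \<partial>M) = 1"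
    using J_NB[of f, OF _ f_nonneg] unfolding point_sum_def by simp
  then have "AE \<omega> in M. expneg (point_sum f \<omega>) = 1"
    by (rule AE_eq_1_if_nn_integral_eq_1[rotated 3]) (simp_all add: expneg_nonneg expneg_le_1)
  then show ?thesis
  proof eventually_elim
    case (elim \<omega>)
    then have "\<forall>i. ennreal (f (J \<omega> i)) = 0"
      unfolding expneg_eq_1_iff point_sum_def by (subst suminf_eq_zero_iff[symmetric]) simp_all
    then show ?case by (simp add: f_def indicator_def not_less)
  qed
qed
lemma AE_regular_jumps: "AE \<omega> in M. regular_jumps \<omega>"
  using AE_J_le_1 J_ranked by eventually_elim (simp add: regular_jumps_def)

lemma point_sum_regular:
  assumes "regular_jumps \<omega>" "adm_factor h"
  shows "summable (\<lambda>i. h (J \<omega> i))" "point_sum h \<omega> = ennreal (\<Sum>i. h (J \<omega> i))"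
    "enn2real (point_sum h \<omega>) = (\<Sum>i. h (J \<omega> i))"
proof -
  show summable: "summable (\<lambda>i. h (J \<omega> i))"
  proof (rule summable_comparison_test[where g="J \<omega>"])
    have "norm (h (J \<omega> i)) \<le> J \<omega> i" for i
    proof -
      have "0 < J \<omega> i" "J \<omega> i \<le> 1" using assms(1) by (auto simp: regular_jumps_def)
      then show ?thesis using adm_factorD(2)[OF assms(2), of "J \<omega> i"] adm_factorD(3)[OF assms(2)] by simp
    qed
    then show "\<exists>N. \<forall>i\<ge>N. norm (h (J \<omega> i)) \<le> J \<omega> i" by blast
    show "summable (J \<omega>)" using assms(1) by (auto simp: regular_jumps_def)
  qed
  show sum: "point_sum h \<omega> = ennreal (\<Sum>i. h (J \<omega> i))"
    unfolding point_sum_def using summable adm_factorD(2)[OF assms(2)] by (intro suminf_ennreal2) auto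
  have "0 \<le> (\<Sum>i. h (J \<omega> i))"
    using summable adm_factorD(2)[OF assms(2)] by (intro suminf_nonneg) auto
  then show "enn2real (point_sum h \<omega>) = (\<Sum>i. h (J \<omega> i))"
    unfolding sum by simp
qed

lemma expneg_point_sum_add:
  assumes \<omega>: "regular_jumps \<omega>" and u: "adm_factor u" and f: "\<And>x. 0 \<le> f x" and s: "0 \<le> s"
  shows "expneg (point_sum (\<lambda>x. f x + s * u x) \<omega>) = expneg (point_sum f \<omega>) * exp (- s * enn2real (point_sum u \<omega>))"
proof -
  have u0: "\<And>x. 0 \<le> u x" using adm_factorD(2)[OF u] .
  have "point_sum (\<lambda>x. f x + s * u x) \<omega> = (\<Sum>i. ennreal (f (J \<omega> i)) + ennreal (s * u (J \<omega> i)))"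
    unfolding point_sum_def using f s u0 by (intro suminf_cong ennreal_plus) auto
  also have "\<dots> = point_sum f \<omega> + (\<Sum>i. ennreal (s * u (J \<omega> i)))"
    unfolding point_sum_def by (rule suminf_add[symmetric]) auto
  also have "(\<Sum>i. ennreal (s * u (J \<omega> i))) = ennreal (s * enn2real (point_sum u \<omega>))"
  proof -
    have summable: "summable (\<lambda>i. s * u (J \<omega> i))"
      using point_sum_regular(1)[OF \<omega> u] by (rule summable_mult)
    have "(\<Sum>i. ennreal (s * u (J \<omega> i))) = ennreal (\<Sum>i. s * u (J \<omega> i))"
      using summable u0 s by (intro suminf_ennreal2) auto
    also have "(\<Sum>i. s * u (J \<omega> i)) = s * enn2real (point_sum u \<omega>)"
      unfolding point_sum_regular(3)[OF \<omega> u] using point_sum_regular(1)[OF \<omega> u] by (rule suminf_mult)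
    finally show ?thesis .
  qed
  finally show ?thesis
    using s by (simp add: expneg_add)
qed

lemma moment_0:
  assumes "adm_exponent f" shows "moment 0 f h = ennreal (moment_formula 0 f h)"
proof -
  have "moment 0 f h = (\<integral>\<^sup>+\<omega>. ennreal (expneg (\<Sum>i. ennreal (f (J \<omega> i)))) \<partial>M)"
    unfolding moment_def distinct_point_sum_def distinct_index_sum_0 point_sum_def by simp
  also have "\<dots> = ennreal (NB_laplace \<alpha> r f)"
    using adm_exponentD(1,2)[OF assms] by (intro J_NB) auto
  also have "NB_laplace \<alpha> r f = moment_formula 0 f h"
    unfolding NB_laplace_eq_Phi[OF assms] moment_formula_def by simp
  finally show ?thesis .
qed

lemma Phi_has_derivative:
  assumes f: "adm_exponent f" and u: "adm_factor u"
  shows "((\<lambda>s. Phi (\<lambda>x. f x + s * u x)) has_field_derivative tilted_integral f u) (at_right 0)"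
proof -
  note [measurable] = adm_exponentD(1)[OF f] adm_factorD(1)[OF u]
  have difference_quotient: "(Phi (\<lambda>x. f x + s * u x) - Phi (\<lambda>x. f x + 0 * u x)) / (s - 0)
      = (LINT x|lborel. exp (- f x) * rho x * (1 - exp (- s * u x))) / s" if s: "0 < s" for s
  proof -
    have "Phi (\<lambda>x. f x + s * u x) - Phi (\<lambda>x. f x + 0 * u x) =
        (LINT x|lborel. (1 - exp (- (f x + s * u x))) * rho x - (1 - exp (- f x)) * rho x)"
      unfolding Phi_def
      using integrable_Phi_integrand[OF adm_exponent_add[OF f u]] integrable_Phi_integrand[OF f] s by simp
    also have "\<dots> = (LINT x|lborel. exp (- f x) * rho x * (1 - exp (- s * u x)))"
      by (rule Bochner_Integration.integral_cong[OF refl]) (simp add: exp_add[symmetric] algebra_simps)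
    finally show ?thesis by simp
  qed
  have lim: "((\<lambda>s. (LINT x|lborel. exp (- f x) * rho x * (1 - exp (- s * u x))) / s) \<longlongrightarrow> tilted_integral f u) (at_right 0)"
    using tendsto_integral_one_minus_exp_div[of "\<lambda>x. exp (- f x) * rho x" u]
      integrable_tilted_integrand[OF f u] rho_nonneg adm_factorD(2)[OF u]
    unfolding tilted_integral_def by (simp add: ac_simps)
  have eventually_eq: "\<forall>\<^sub>F s in at_right 0. (Phi (\<lambda>x. f x + s * u x) - Phi (\<lambda>x. f x + 0 * u x)) / (s - 0)
      = (LINT x|lborel. exp (- f x) * rho x * (1 - exp (- s * u x))) / s"
    using eventually_at_right_less[of "0::real"] by eventually_elim (rule difference_quotient)
  have "((\<lambda>s. (Phi (\<lambda>x. f x + s * u x) - Phi (\<lambda>x. f x + 0 * u x)) / (s - 0)) \<longlongrightarrow> tilted_integral f u) (at_right 0)"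
    by (subst tendsto_cong[OF eventually_eq]) (rule lim)
  then show ?thesis unfolding has_field_derivative_iff by simp
qed

lemma tilted_integral_has_derivative:
  assumes f: "adm_exponent f" and u: "adm_factor u" and h: "adm_factor h"
  shows "((\<lambda>s. tilted_integral (\<lambda>x. f x + s * u x) h) has_field_derivative
    - tilted_integral f (\<lambda>x. h x * u x)) (at_right 0)"
proof -
  note [measurable] = adm_exponentD(1)[OF f] adm_factorD(1)[OF u] adm_factorD(1)[OF h]
  have difference_quotient: "(tilted_integral (\<lambda>x. f x + s * u x) h - tilted_integral (\<lambda>x. f x + 0 * u x) h) / (s - 0)
      = - ((LINT x|lborel. exp (- f x) * h x * rho x * (1 - exp (- s * u x))) / s)" if s: "0 < s" for s
  proof -
    have "tilted_integral (\<lambda>x. f x + s * u x) h - tilted_integral (\<lambda>x. f x + 0 * u x) h =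
        (LINT x|lborel. exp (- (f x + s * u x)) * h x * rho x - exp (- f x) * h x * rho x)"
      unfolding tilted_integral_def
      using integrable_tilted_integrand[OF adm_exponent_add[OF f u] h] integrable_tilted_integrand[OF f h] s by simp
    also have "\<dots> = (LINT x|lborel. - (exp (- f x) * h x * rho x * (1 - exp (- s * u x))))"
      by (rule Bochner_Integration.integral_cong[OF refl]) (simp add: exp_add[symmetric] algebra_simps)
    finally show ?thesis by simp
  qed
  have "((\<lambda>s. (LINT x|lborel. exp (- f x) * h x * rho x * (1 - exp (- s * u x))) / s)
      \<longlongrightarrow> tilted_integral f (\<lambda>x. h x * u x)) (at_right 0)"
    using tendsto_integral_one_minus_exp_div[of "\<lambda>x. exp (- f x) * h x * rho x" u]
      integrable_tilted_integrand[OF f adm_factor_mult[OF h u]] rho_nonneg adm_factorD(2)[OF u] adm_factorD(2)[OF h]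
    unfolding tilted_integral_def by (simp add: ac_simps)
  then have "((\<lambda>s. - ((LINT x|lborel. exp (- f x) * h x * rho x * (1 - exp (- s * u x))) / s))
      \<longlongrightarrow> - tilted_integral f (\<lambda>x. h x * u x)) (at_right 0)"
    by (rule tendsto_minus)
  moreover have "\<forall>\<^sub>F s in at_right 0. (tilted_integral (\<lambda>x. f x + s * u x) h - tilted_integral (\<lambda>x. f x + 0 * u x) h) / (s - 0)
      = - ((LINT x|lborel. exp (- f x) * h x * rho x * (1 - exp (- s * u x))) / s)"
    using eventually_at_right_less[of "0::real"] by eventually_elim (rule difference_quotient)
  ultimately have "((\<lambda>s. (tilted_integral (\<lambda>x. f x + s * u x) h - tilted_integral (\<lambda>x. f x + 0 * u x) h) / (s - 0))
      \<longlongrightarrow> - tilted_integral f (\<lambda>x. h x * u x)) (at_right 0)"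
    by (simp add: tendsto_cong)
  then show ?thesis unfolding has_field_derivative_iff by simp
qed

lemma moment_formula_has_derivative:
  assumes f: "adm_exponent f" and h: "\<And>j. j \<le> k \<Longrightarrow> adm_factor (h j)"
  shows "((\<lambda>s. moment_formula k (\<lambda>x. f x + s * h k x) h) has_field_derivative
    - (moment_formula (Suc k) f h + (\<Sum>j<k. moment_formula k f (h(j := \<lambda>x. h j x * h k x))))) (at_right 0)"
proof -
  let ?D = "\<lambda>g. tilted_integral f g" and ?c = "- (r + k)" and ?merged = "\<lambda>j. h(j := \<lambda>x. h j x * h k x)"
  have u: "adm_factor (h k)" using h by simp
  have "DERIV (\<lambda>z. z powr ?c) (Phi (\<lambda>x. f x + 0 * h k x)) :> ?c * Phi f powr (?c - 1)"
    using has_real_derivative_powr[of "Phi f" ?c] Phi_ge_1[OF f] by simp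
  from DERIV_chain2[OF this Phi_has_derivative[OF f u]]
  have "((\<lambda>s. Phi (\<lambda>x. f x + s * h k x) powr ?c) has_field_derivative ?c * Phi f powr (?c - 1) * ?D (h k)) (at_right 0)"
    by simp
  moreover have "((\<lambda>s. \<Prod>j<k. tilted_integral (\<lambda>x. f x + s * h k x) (h j)) has_field_derivative
      (\<Sum>j<k. - ?D (\<lambda>x. h j x * h k x) * (\<Prod>i\<in>{..<k}-{j}. tilted_integral (\<lambda>x. f x + 0 * h k x) (h i)))) (at_right 0)"
    by (rule has_field_derivative_prod_within) (use tilted_integral_has_derivative[OF f u] h in auto)
  ultimately have "((\<lambda>s. pochhammer r k * (Phi (\<lambda>x. f x + s * h k x) powr ?c
        * (\<Prod>j<k. tilted_integral (\<lambda>x. f x + s * h k x) (h j)))) has_field_derivative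
      pochhammer r k * (Phi (\<lambda>x. f x + 0 * h k x) powr ?c
        * (\<Sum>j<k. - ?D (\<lambda>x. h j x * h k x) * (\<Prod>i\<in>{..<k}-{j}. tilted_integral (\<lambda>x. f x + 0 * h k x) (h i)))
      + ?c * Phi f powr (?c - 1) * ?D (h k) * (\<Prod>j<k. tilted_integral (\<lambda>x. f x + 0 * h k x) (h j)))) (at_right 0)"
    by (intro DERIV_cmult DERIV_mult')
  then have derivative: "((\<lambda>s. moment_formula k (\<lambda>x. f x + s * h k x) h) has_field_derivative
      pochhammer r k * (Phi f powr ?c * (\<Sum>j<k. - ?D (\<lambda>x. h j x * h k x) * (\<Prod>i\<in>{..<k}-{j}. ?D (h i)))
      + ?c * Phi f powr (?c - 1) * ?D (h k) * (\<Prod>j<k. ?D (h j)))) (at_right 0)"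
    unfolding moment_formula_def by (simp add: mult.assoc)
  have merged: "moment_formula k f (?merged j)
      = pochhammer r k * Phi f powr ?c * (?D (\<lambda>x. h j x * h k x) * (\<Prod>i\<in>{..<k}-{j}. ?D (h i)))" if "j < k" for j
  proof -
    have "(\<Prod>i\<in>{..<k}-{j}. ?D (?merged j i)) = (\<Prod>i\<in>{..<k}-{j}. ?D (h i))"
      by (intro prod.cong) auto
    then show ?thesis
      unfolding moment_formula_def using that by (subst prod.remove[of _ j]) auto
  qed
  have "(\<Sum>j<k. moment_formula k f (?merged j))
      = pochhammer r k * Phi f powr ?c * (\<Sum>j<k. ?D (\<lambda>x. h j x * h k x) * (\<Prod>i\<in>{..<k}-{j}. ?D (h i)))"
    unfolding sum_distrib_left by (rule sum.cong) (simp_all add: merged)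
  moreover have "moment_formula (Suc k) f h
      = pochhammer r k * (r + k) * Phi f powr (?c - 1) * (?D (h k) * (\<Prod>j<k. ?D (h j)))"
  proof -
    have exponent: "- (r + real (Suc k)) = ?c - 1" by simp
    show ?thesis unfolding moment_formula_def exponent by (simp add: pochhammer_Suc algebra_simps)
  qed
  ultimately show ?thesis
    using derivative by (simp add: sum_negf algebra_simps)
qed

lemma moment_split:
  assumes f: "adm_exponent f" and u: "adm_factor u" and s: "0 \<le> s"
    and h: "\<And>j. j < k \<Longrightarrow> h j \<in> borel_measurable borel"
  shows "moment k f h = moment k (\<lambda>x. f x + s * u x) h
    + (\<integral>\<^sup>+\<omega>. ennreal (expneg (point_sum f \<omega>) * (1 - exp (- s * enn2real (point_sum u \<omega>)))) * distinct_point_sum k h \<omega> \<partial>M)"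
proof -
  note [measurable] = adm_exponentD(1)[OF f] adm_factorD(1)[OF u] distinct_point_sum_measurable[OF h]
  let ?X = "\<lambda>\<omega>. expneg (point_sum f \<omega>)" and ?E = "\<lambda>\<omega>. exp (- s * enn2real (point_sum u \<omega>))"
  have E: "0 \<le> ?E \<omega>" "?E \<omega> \<le> 1" for \<omega> using s by auto
  have "ennreal (?X \<omega>) = ennreal (?X \<omega> * ?E \<omega>) + ennreal (?X \<omega> * (1 - ?E \<omega>))" for \<omega>
    using E[of \<omega>] expneg_nonneg[of "point_sum f \<omega>"]
    by (subst ennreal_plus[symmetric]) (auto simp: algebra_simps mult_left_le)
  then have "moment k f h = (\<integral>\<^sup>+\<omega>. ennreal (?X \<omega> * ?E \<omega>) * distinct_point_sum k h \<omega> \<partial>M)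
      + (\<integral>\<^sup>+\<omega>. ennreal (?X \<omega> * (1 - ?E \<omega>)) * distinct_point_sum k h \<omega> \<partial>M)"
    unfolding moment_def by (subst nn_integral_add[symmetric]) (auto simp: distrib_right)
  also have "(\<integral>\<^sup>+\<omega>. ennreal (?X \<omega> * ?E \<omega>) * distinct_point_sum k h \<omega> \<partial>M) = moment k (\<lambda>x. f x + s * u x) h"
    unfolding moment_def
    by (rule nn_integral_cong_AE)
      (use AE_regular_jumps in \<open>eventually_elim, simp add: expneg_point_sum_add[OF _ u adm_exponentD(2)[OF f] s]\<close>)
  finally show ?thesis .
qed

lemma moment_difference_quotient:
  assumes f: "adm_exponent f" and u: "adm_factor u" and h: "\<And>j. j < k \<Longrightarrow> adm_factor (h j)"
    and formula: "\<And>s. 0 \<le> s \<Longrightarrow> moment k (\<lambda>x. f x + s * u x) h = ennreal (moment_formula k (\<lambda>x. f x + s * u x) h)"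
    and s: "0 < s"
  shows "(\<integral>\<^sup>+\<omega>. ennreal (expneg (point_sum f \<omega>) * ((1 - exp (- s * enn2real (point_sum u \<omega>))) / s))
      * distinct_point_sum k h \<omega> \<partial>M)
    = ennreal ((moment_formula k f h - moment_formula k (\<lambda>x. f x + s * u x) h) / s)"
proof -
  note [measurable] = adm_exponentD(1)[OF f] adm_factorD(1)[OF u] distinct_point_sum_measurable[OF adm_factorD(1)[OF h]]
  have h_measurable: "\<And>j. j < k \<Longrightarrow> h j \<in> borel_measurable borel" using adm_factorD(1)[OF h] by blast
  let ?X = "\<lambda>\<omega>. expneg (point_sum f \<omega>) * (1 - exp (- s * enn2real (point_sum u \<omega>)))"
  have X_nonneg: "0 \<le> ?X \<omega>" for \<omega>
    using s expneg_nonneg[of "point_sum f \<omega>"] by simp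
  have "ennreal (moment_formula k f h) = ennreal (moment_formula k (\<lambda>x. f x + s * u x) h)
      + (\<integral>\<^sup>+\<omega>. ennreal (?X \<omega>) * distinct_point_sum k h \<omega> \<partial>M)"
    using moment_split[where k=k and h=h, OF f u less_imp_le[OF s] h_measurable] formula[of 0] formula[OF less_imp_le[OF s]]
    by simp
  then have "(\<integral>\<^sup>+\<omega>. ennreal (?X \<omega>) * distinct_point_sum k h \<omega> \<partial>M)
      = ennreal (moment_formula k f h - moment_formula k (\<lambda>x. f x + s * u x) h)"
    using moment_formula_nonneg[OF adm_exponent_add[OF f u less_imp_le[OF s]] h] by (simp add: ennreal_minus[symmetric])
  moreover have "ennreal (expneg (point_sum f \<omega>) * ((1 - exp (- s * enn2real (point_sum u \<omega>))) / s))
      = ennreal (1 / s) * ennreal (?X \<omega>)" for \<omega>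
    using s X_nonneg[of \<omega>] by (simp add: ennreal_mult[symmetric])
  moreover have "(\<integral>\<^sup>+\<omega>. ennreal (1 / s) * ennreal (?X \<omega>) * distinct_point_sum k h \<omega> \<partial>M)
      = ennreal (1 / s) * (\<integral>\<^sup>+\<omega>. ennreal (?X \<omega>) * distinct_point_sum k h \<omega> \<partial>M)"
    unfolding mult.assoc by (rule nn_integral_cmult) measurable
  ultimately show ?thesis
    using s by (simp add: ennreal_mult'[symmetric])
qed

text \<open>Differentiating the formula for \<open>moment k\<close> in the direction \<open>u\<close> at \<open>0\<^sup>+\<close> brings down a factor
  \<open>N(u)\<close>; the exchange of limit and expectation is monotone convergence, since \<open>(1 - e\<^sup>-\<^sup>s\<^sup>y)/s\<close>
  increases to \<open>y\<close> as \<open>s \<down> 0\<close>.\<close>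
lemma moment_times_point_sum:
  assumes f: "adm_exponent f" and u: "adm_factor u" and h: "\<And>j. j < k \<Longrightarrow> adm_factor (h j)"
    and formula: "\<And>s. 0 \<le> s \<Longrightarrow> moment k (\<lambda>x. f x + s * u x) h = ennreal (moment_formula k (\<lambda>x. f x + s * u x) h)"
    and D: "((\<lambda>s. moment_formula k (\<lambda>x. f x + s * u x) h) has_field_derivative D) (at_right 0)"
  shows "(\<integral>\<^sup>+\<omega>. ennreal (expneg (point_sum f \<omega>)) * point_sum u \<omega> * distinct_point_sum k h \<omega> \<partial>M) = ennreal (- D)"
proof -
  note [measurable] = adm_exponentD(1)[OF f] adm_factorD(1)[OF u] distinct_point_sum_measurable[OF adm_factorD(1)[OF h]]
  define q where "q m = 1 / real (Suc m)" for m
  define g where "g m \<omega> = ennreal (expneg (point_sum f \<omega>) * ((1 - exp (- q m * enn2real (point_sum u \<omega>))) / q m))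
    * distinct_point_sum k h \<omega>" for m \<omega>
  have g_measurable: "g m \<in> borel_measurable M" for m
    unfolding g_def by measurable
  have g_incseq: "incseq (\<lambda>m. g m \<omega>)" for \<omega>
    using incseq_ennreal_one_minus_exp_div[OF expneg_nonneg enn2real_nonneg]
    unfolding g_def q_def incseq_def by (auto intro: mult_right_mono)
  have "(\<lambda>m. (moment_formula k f h - moment_formula k (\<lambda>x. f x + q m * u x) h) / q m) \<longlonglongrightarrow> - D"
  proof -
    have "filterlim q (at_right 0) sequentially"
      unfolding q_def by (intro tendsto_imp_filterlim_at_right LIMSEQ_Suc[OF lim_const_over_n]) auto
    from filterlim_compose[OF D[unfolded has_field_derivative_iff] this]
    show ?thesis
      using tendsto_minus by (fastforce simp: minus_divide_left)
  qed
  moreover have "(\<integral>\<^sup>+\<omega>. g m \<omega> \<partial>M) = ennreal ((moment_formula k f h - moment_formula k (\<lambda>x. f x + q m * u x) h) / q m)" for m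
    unfolding g_def by (rule moment_difference_quotient[OF f u h formula]) (simp_all add: q_def)
  ultimately have "(\<lambda>m. \<integral>\<^sup>+\<omega>. g m \<omega> \<partial>M) \<longlonglongrightarrow> ennreal (- D)"
    by (simp add: tendsto_ennrealI)
  moreover have "(\<lambda>m. \<integral>\<^sup>+\<omega>. g m \<omega> \<partial>M) \<longlonglongrightarrow> (\<integral>\<^sup>+\<omega>. (SUP m. g m \<omega>) \<partial>M)"
    using g_incseq g_measurable by (subst nn_integral_monotone_convergence_SUP_AE)
      (auto intro!: LIMSEQ_SUP incseq_SucI nn_integral_mono simp: incseq_Suc_iff)
  moreover have "(SUP m. g m \<omega>) = ennreal (expneg (point_sum f \<omega>)) * point_sum u \<omega> * distinct_point_sum k h \<omega>"
    if "regular_jumps \<omega>" for \<omega>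
    using SUP_ennreal_one_minus_exp_div[OF expneg_nonneg enn2real_nonneg] point_sum_regular(2)[OF that u] expneg_nonneg
    unfolding g_def q_def by (simp add: SUP_mult_right_ennreal[symmetric] ennreal_mult' ennreal_enn2real)
  then have "(\<integral>\<^sup>+\<omega>. (SUP m. g m \<omega>) \<partial>M)
      = (\<integral>\<^sup>+\<omega>. ennreal (expneg (point_sum f \<omega>)) * point_sum u \<omega> * distinct_point_sum k h \<omega> \<partial>M)"
    by (intro nn_integral_cong_AE) (use AE_regular_jumps in \<open>eventually_elim, simp\<close>)
  ultimately show ?thesis
    using LIMSEQ_unique by metis
qed

lemma distinct_point_sum_Suc:
  assumes "\<And>j x. j \<le> k \<Longrightarrow> 0 \<le> h j x"
  shows "point_sum (h k) \<omega> * distinct_point_sum k h \<omega>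
    = distinct_point_sum (Suc k) h \<omega> + (\<Sum>j<k. distinct_point_sum k (h(j := \<lambda>x. h j x * h k x)) \<omega>)"
proof -
  define W where "W j i = ennreal (h j (J \<omega> i))" for j i
  have "(\<lambda>j' i. ennreal ((h(j := \<lambda>x. h j x * h k x)) j' (J \<omega> i))) = W(j := (\<lambda>i. W j i * W k i))" if "j < k" for j
    unfolding W_def using assms that by (auto simp: fun_eq_iff ennreal_mult)
  then have "(\<Sum>j<k. distinct_point_sum k (h(j := \<lambda>x. h j x * h k x)) \<omega>)
      = (\<Sum>j<k. distinct_index_sum k (W(j := (\<lambda>i. W j i * W k i))))"
    unfolding distinct_point_sum_def W_def by (intro sum.cong) auto
  then show ?thesis
    using distinct_index_sum_Suc[of W k] unfolding distinct_point_sum_def point_sum_def W_def by simp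
qed

lemma moment_Suc:
  assumes IH: "\<And>f h. adm_exponent f \<Longrightarrow> (\<And>j. j < k \<Longrightarrow> adm_factor (h j)) \<Longrightarrow> moment k f h = ennreal (moment_formula k f h)"
    and f: "adm_exponent f" and h: "\<And>j. j \<le> k \<Longrightarrow> adm_factor (h j)"
  shows "moment (Suc k) f h = ennreal (moment_formula (Suc k) f h)"
proof -
  let ?merged = "\<lambda>j. h(j := \<lambda>x. h j x * h k x)"
  have u: "adm_factor (h k)" and hk: "\<And>j. j < k \<Longrightarrow> adm_factor (h j)" using h by auto
  have merged: "adm_factor (?merged j i)" if "j < k" "i < k" for i j
    using hk adm_factor_mult[OF _ u] that by auto
  have measurable: "\<And>j. j \<le> k \<Longrightarrow> h j \<in> borel_measurable borel" using adm_factorD(1)[OF h] by blast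
  note [measurable] = adm_exponentD(1)[OF f]
  let ?b = "\<Sum>j<k. moment_formula k f (?merged j)"
  have b_nonneg: "0 \<le> ?b"
    using merged by (intro sum_nonneg moment_formula_nonneg[OF f]) auto
  have formula: "moment k (\<lambda>x. f x + s * h k x) h = ennreal (moment_formula k (\<lambda>x. f x + s * h k x) h)"
    if "0 \<le> s" for s
    using IH[OF adm_exponent_add[OF f u that] hk] .
  have "ennreal (moment_formula (Suc k) f h + ?b)
      = (\<integral>\<^sup>+\<omega>. ennreal (expneg (point_sum f \<omega>)) * point_sum (h k) \<omega> * distinct_point_sum k h \<omega> \<partial>M)"
    using moment_times_point_sum[where k=k and h=h and u="h k",
        OF f u hk formula moment_formula_has_derivative[where k=k and h=h, OF f h]]
    by (simp add: add.commute)
  also have "\<dots> = (\<integral>\<^sup>+\<omega>. ennreal (expneg (point_sum f \<omega>)) * distinct_point_sum (Suc k) h \<omega>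
      + (\<Sum>j<k. ennreal (expneg (point_sum f \<omega>)) * distinct_point_sum k (?merged j) \<omega>) \<partial>M)"
    using distinct_point_sum_Suc[of k h] adm_factorD(2)[OF h]
    by (intro nn_integral_cong) (simp add: mult.assoc distrib_left sum_distrib_left)
  also have "\<dots> = moment (Suc k) f h + (\<Sum>j<k. moment k f (?merged j))"
    unfolding moment_def using measurable merged adm_factorD(1)
    by (subst nn_integral_add) (auto intro!: nn_integral_sum)
  also have "(\<Sum>j<k. moment k f (?merged j)) = (\<Sum>j<k. ennreal (moment_formula k f (?merged j)))"
    using IH[OF f] merged by (intro sum.cong) auto
  also have "\<dots> = ennreal ?b"
    using merged by (intro sum_ennreal moment_formula_nonneg[OF f]) auto
  finally have sum: "ennreal (moment_formula (Suc k) f h + ?b) = moment (Suc k) f h + ennreal ?b" .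
  have "moment (Suc k) f h = (moment (Suc k) f h + ennreal ?b) - ennreal ?b"
    by simp
  also have "\<dots> = ennreal (moment_formula (Suc k) f h)"
    unfolding sum[symmetric] using b_nonneg by (simp add: ennreal_minus)
  finally show ?thesis .
qed

theorem moment_eq_formula:
  "adm_exponent f \<Longrightarrow> (\<And>j. j < k \<Longrightarrow> adm_factor (h j)) \<Longrightarrow> moment k f h = ennreal (moment_formula k f h)"
proof (induction k arbitrary: f h)
  case 0
  from 0(1) show ?case by (rule moment_0)
next
  case (Suc k)
  then show ?case by (intro moment_Suc) auto
qed

section \<open>Representations of the partition probability\<close>

lemma moment_scaled_abs:
  assumes "0 \<le> t"
  shows "moment k (\<lambda>x. t * \<bar>x\<bar>) h
    = (\<integral>\<^sup>+\<omega>. ennreal (exp (- t * enn2real (point_sum abs \<omega>))) * distinct_point_sum k h \<omega> \<partial>M)"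
  unfolding moment_def
proof (rule nn_integral_cong_AE)
  show "AE \<omega> in M. ennreal (expneg (point_sum (\<lambda>x. t * \<bar>x\<bar>) \<omega>)) * distinct_point_sum k h \<omega>
      = ennreal (exp (- t * enn2real (point_sum abs \<omega>))) * distinct_point_sum k h \<omega>"
    using AE_regular_jumps
  proof eventually_elim
    case (elim \<omega>)
    have "expneg (point_sum (\<lambda>x. 0 + t * \<bar>x\<bar>) \<omega>) = expneg (point_sum (\<lambda>_. 0) \<omega>) * exp (- t * enn2real (point_sum abs \<omega>))"
      using assms by (intro expneg_point_sum_add[OF elim adm_factor_abs]) auto
    then show ?case by (simp add: point_sum_def expneg_def)
  qed
qed

lemma tilted_integral_abs_power:
  assumes t: "0 \<le> t" and m: "0 < m"
  shows "ennreal (tilted_integral (\<lambda>x. t * \<bar>x\<bar>) (\<lambda>x. \<bar>x\<bar> ^ m))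
    = (\<integral>\<^sup>+x. ennreal (rho x * x ^ m * exp (- t * x)) \<partial>lborel)"
proof -
  have "(\<integral>\<^sup>+x. ennreal (exp (- (t * \<bar>x\<bar>)) * \<bar>x\<bar> ^ m * rho x) \<partial>lborel)
      = ennreal (tilted_integral (\<lambda>x. t * \<bar>x\<bar>) (\<lambda>x. \<bar>x\<bar> ^ m))"
    unfolding tilted_integral_def
    using integrable_tilted_integrand[OF adm_exponent_scaled_abs[OF t] adm_factor_abs_power[OF m]] rho_nonneg
    by (intro nn_integral_eq_integral) auto
  moreover have "(\<integral>\<^sup>+x. ennreal (exp (- (t * \<bar>x\<bar>)) * \<bar>x\<bar> ^ m * rho x) \<partial>lborel)
      = (\<integral>\<^sup>+x. ennreal (rho x * x ^ m * exp (- t * x)) \<partial>lborel)"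
    by (intro nn_integral_cong) (auto simp: rhoPD_def mult_ac)
  ultimately show ?thesis by simp
qed

lemma tilted_integral_abs_power_eq:
  assumes t: "0 < t" and m: "0 < m"
  shows "tilted_integral (\<lambda>x. t * \<bar>x\<bar>) (\<lambda>x. \<bar>x\<bar> ^ m)
    = \<alpha> * t powr (\<alpha> - m) * Gamma (m - \<alpha>) * Ginc (m - \<alpha>) t"
proof -
  have a: "0 < real m - \<alpha>" using m alpha by linarith
  have "(\<integral>\<^sup>+x. ennreal (rho x * x ^ m * exp (- t * x)) \<partial>lborel)
      = (\<integral>\<^sup>+x. ennreal \<alpha> * (ennreal (x powr (real m - \<alpha> - 1) * exp (- t * x)) * indicator {0<..1} x) \<partial>lborel)"
  proof (rule nn_integral_cong)
    fix x :: real
    have "x powr (- \<alpha> - 1) * x ^ m = x powr (- \<alpha> - 1 + real m)" if "0 < x"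
      using that by (simp add: powr_realpow[symmetric] powr_add[symmetric])
    moreover have "- \<alpha> - 1 + real m = real m - \<alpha> - 1" by simp
    ultimately show "ennreal (rho x * x ^ m * exp (- t * x))
        = ennreal \<alpha> * (ennreal (x powr (real m - \<alpha> - 1) * exp (- t * x)) * indicator {0<..1} x)"
      using alpha by (auto simp: rhoPD_def indicator_def ennreal_mult'[symmetric] mult_ac)
  qed
  also have "\<dots> = ennreal (\<alpha> * (t powr (- (real m - \<alpha>)) * Gamma (m - \<alpha>) * Ginc (m - \<alpha>) t))"
    using nn_integral_powr_exp_unit_interval[OF a t] alpha
    by (subst nn_integral_cmult) (auto simp: ennreal_mult'[symmetric])
  finally have "ennreal (tilted_integral (\<lambda>x. t * \<bar>x\<bar>) (\<lambda>x. \<bar>x\<bar> ^ m))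
      = ennreal (\<alpha> * t powr (\<alpha> - m) * Gamma (m - \<alpha>) * Ginc (m - \<alpha>) t)"
    unfolding tilted_integral_abs_power[OF less_imp_le[OF t] m] by (simp add: mult_ac)
  moreover have "0 \<le> \<alpha> * t powr (\<alpha> - m) * Gamma (m - \<alpha>) * Ginc (m - \<alpha>) t"
    using alpha a Ginc_nonneg[OF a] by (simp add: Gamma_real_pos less_imp_le)
  ultimately show ?thesis
    using tilted_integral_nonneg[OF adm_factor_abs_power[OF m]] by simp
qed

lemma moment_formula_abs_power:
  assumes t: "0 < t" and m: "\<And>j. j < k \<Longrightarrow> 0 < m j"
  shows "moment_formula k (\<lambda>x. t * \<bar>x\<bar>) (\<lambda>j x. \<bar>x\<bar> ^ m j)
    = pochhammer r k * \<alpha> ^ k * t powr (k * \<alpha> - (\<Sum>j<k. m j)) / PsiPD \<alpha> t powr (r + k)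
      * (\<Prod>j<k. Gamma (m j - \<alpha>)) * (\<Prod>j<k. Ginc (m j - \<alpha>) t)"
proof -
  have "(\<Prod>j<k. tilted_integral (\<lambda>x. t * \<bar>x\<bar>) (\<lambda>x. \<bar>x\<bar> ^ m j))
      = (\<Prod>j<k. \<alpha> * t powr (\<alpha> - m j) * Gamma (m j - \<alpha>) * Ginc (m j - \<alpha>) t)"
    using t m by (intro prod.cong refl tilted_integral_abs_power_eq) auto
  also have "\<dots> = \<alpha> ^ k * t powr (\<Sum>j<k. \<alpha> - m j) * (\<Prod>j<k. Gamma (m j - \<alpha>)) * (\<Prod>j<k. Ginc (m j - \<alpha>) t)"
    using t by (simp add: prod.distrib powr_sum)
  finally show ?thesis
    unfolding moment_formula_def Phi_scaled_abs powr_minus_divide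
    by (simp add: sum_subtractf field_simps)
qed

lemma partition_prob_eq_moment_integral:
  assumes "blocks n k A" and k: "1 \<le> k"
  shows "(\<integral>\<^sup>+\<omega>. sample_partition_prob (\<lambda>i. J \<omega> i / (\<Sum>j. J \<omega> j)) n (A ` {..<k}) \<partial>M)
    = (\<integral>\<^sup>+t\<in>{0<..}. ennreal (t ^ (n - 1) / fact (n - 1)
        * moment_formula k (\<lambda>x. t * \<bar>x\<bar>) (\<lambda>j x. \<bar>x\<bar> ^ card (A j))) \<partial>lborel)"
proof -
  interpret blocks n k A by fact
  interpret pair_sigma_finite M lborel ..
  let ?h = "\<lambda>j (x::real). \<bar>x\<bar> ^ card (A j)" and ?T = "\<lambda>\<omega>. enn2real (point_sum abs \<omega>)"
  let ?c = "\<lambda>t::real. t ^ (n - 1) / fact (n - 1)"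
  have h: "\<And>j. j < k \<Longrightarrow> adm_factor (?h j)"
    using card_block_pos by (auto intro: adm_factor_abs_power)
  have [measurable]: "distinct_point_sum k ?h \<in> borel_measurable M"
    by (rule distinct_point_sum_measurable) simp
  have sample: "sample_partition_prob (\<lambda>i. J \<omega> i / (\<Sum>j. J \<omega> j)) n (A ` {..<k})
      = (\<integral>\<^sup>+t. ennreal (?c t * exp (- t * ?T \<omega>)) * indicator {0<..} t * distinct_point_sum k ?h \<omega> \<partial>lborel)"
    if \<omega>: "regular_jumps \<omega>" for \<omega>
  proof -
    have J: "0 < J \<omega> i" for i using \<omega> by (simp add: regular_jumps_def)
    have T: "?T \<omega> = (\<Sum>j. J \<omega> j)"
      using point_sum_regular(3)[OF \<omega> adm_factor_abs] J by (simp add: less_imp_le)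
    have "0 < (\<Sum>j. J \<omega> j)"
      using \<omega> J by (intro suminf_pos) (auto simp: regular_jumps_def)
    from sample_partition_prob_gamma_integral[OF k this, of "J \<omega>"] show ?thesis
      using J unfolding T distinct_point_sum_def by (simp add: less_imp_le mult_ac)
  qed
  have "AE \<omega> in M. sample_partition_prob (\<lambda>i. J \<omega> i / (\<Sum>j. J \<omega> j)) n (A ` {..<k})
      = (\<integral>\<^sup>+t. ennreal (?c t * exp (- t * ?T \<omega>)) * indicator {0<..} t * distinct_point_sum k ?h \<omega> \<partial>lborel)"
    using AE_regular_jumps by eventually_elim (rule sample)
  then have "(\<integral>\<^sup>+\<omega>. sample_partition_prob (\<lambda>i. J \<omega> i / (\<Sum>j. J \<omega> j)) n (A ` {..<k}) \<partial>M)
      = (\<integral>\<^sup>+\<omega>. \<integral>\<^sup>+t. ennreal (?c t * exp (- t * ?T \<omega>)) * indicator {0<..} t * distinct_point_sum k ?h \<omega> \<partial>lborel \<partial>M)"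
    by (rule nn_integral_cong_AE)
  also have "\<dots> = (\<integral>\<^sup>+t. \<integral>\<^sup>+\<omega>. ennreal (?c t * exp (- t * ?T \<omega>)) * indicator {0<..} t * distinct_point_sum k ?h \<omega> \<partial>M \<partial>lborel)"
    by (rule Fubini'[symmetric]) measurable
  also have "\<dots> = (\<integral>\<^sup>+t\<in>{0<..}. ennreal (?c t * moment_formula k (\<lambda>x. t * \<bar>x\<bar>) ?h) \<partial>lborel)"
  proof (rule nn_integral_cong)
    fix t :: real
    show "(\<integral>\<^sup>+\<omega>. ennreal (?c t * exp (- t * ?T \<omega>)) * indicator {0<..} t * distinct_point_sum k ?h \<omega> \<partial>M)
        = ennreal (?c t * moment_formula k (\<lambda>x. t * \<bar>x\<bar>) ?h) * indicator {0<..} t"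
    proof (cases "0 < t")
      case t: True
      have "(\<integral>\<^sup>+\<omega>. ennreal (?c t * exp (- t * ?T \<omega>)) * indicator {0<..} t * distinct_point_sum k ?h \<omega> \<partial>M)
          = (\<integral>\<^sup>+\<omega>. ennreal (?c t) * (ennreal (exp (- t * ?T \<omega>)) * distinct_point_sum k ?h \<omega>) \<partial>M)"
        using t by (intro nn_integral_cong, subst ennreal_mult') (simp_all add: mult_ac)
      also have "\<dots> = ennreal (?c t) * (\<integral>\<^sup>+\<omega>. ennreal (exp (- t * ?T \<omega>)) * distinct_point_sum k ?h \<omega> \<partial>M)"
        by (rule nn_integral_cmult) measurable
      also have "\<dots> = ennreal (?c t) * moment k (\<lambda>x. t * \<bar>x\<bar>) ?h"
        using t by (simp add: moment_scaled_abs)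
      also have "\<dots> = ennreal (?c t * moment_formula k (\<lambda>x. t * \<bar>x\<bar>) ?h)"
        using t moment_eq_formula[where k=k and h="?h", OF adm_exponent_scaled_abs h]
        by (simp add: ennreal_mult'[symmetric])
      finally show ?thesis using t by simp
    qed simp
  qed
  finally show ?thesis .
qed

lemma gamma_form_eq_moment_integral:
  assumes "blocks n k A" and k: "1 \<le> k"
  shows "ennreal (\<alpha> ^ k * pochhammer r k / Gamma (real n) * (\<Prod>i<k. Gamma (real (card (A i)) - \<alpha>)))
      * (\<integral>\<^sup>+t\<in>{0<..}. ennreal (t powr (real k * \<alpha> - 1) / PsiPD \<alpha> t powr (r + real k)
          * (\<Prod>i<k. Ginc (real (card (A i)) - \<alpha>) t)) \<partial>lborel)
    = (\<integral>\<^sup>+t\<in>{0<..}. ennreal (t ^ (n - 1) / fact (n - 1)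
        * moment_formula k (\<lambda>x. t * \<bar>x\<bar>) (\<lambda>j x. \<bar>x\<bar> ^ card (A j))) \<partial>lborel)"
proof -
  interpret blocks n k A by fact
  let ?K = "\<alpha> ^ k * pochhammer r k / Gamma (real n) * (\<Prod>i<k. Gamma (real (card (A i)) - \<alpha>))"
  let ?f = "\<lambda>t. t powr (real k * \<alpha> - 1) / PsiPD \<alpha> t powr (r + real k) * (\<Prod>i<k. Ginc (real (card (A i)) - \<alpha>) t)"
  have n: "0 < n" using n_pos[OF k] .
  have a: "0 < real (card (A i)) - \<alpha>" if "i < k" for i
    using card_block_pos[OF that] alpha by linarith
  have K: "0 \<le> ?K"
    using alpha r n a by (intro mult_nonneg_nonneg divide_nonneg_pos prod_nonneg pochhammer_nonneg)
      (auto simp: Gamma_real_pos less_imp_le)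
  have pointwise: "?K * ?f t = t ^ (n - 1) / fact (n - 1) * moment_formula k (\<lambda>x. t * \<bar>x\<bar>) (\<lambda>j x. \<bar>x\<bar> ^ card (A j))"
    if t: "0 < t" for t
  proof -
    have "t ^ (n - 1) * t powr (real k * \<alpha> - real n) = t powr (real k * \<alpha> - 1)"
      using t n by (simp add: powr_realpow[symmetric] powr_add[symmetric] of_nat_diff)
    moreover have "Gamma (real n) = fact (n - 1)"
      using Gamma_fact[of "n - 1"] n by (simp add: of_nat_diff)
    moreover have "(\<Sum>j<k. real (card (A j))) = real n"
      using sum_card_blocks by (simp flip: of_nat_sum)
    moreover have "moment_formula k (\<lambda>x. t * \<bar>x\<bar>) (\<lambda>j x. \<bar>x\<bar> ^ card (A j))
        = pochhammer r k * \<alpha> ^ k * t powr (k * \<alpha> - (\<Sum>j<k. real (card (A j)))) / PsiPD \<alpha> t powr (r + k)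
          * (\<Prod>j<k. Gamma (card (A j) - \<alpha>)) * (\<Prod>j<k. Ginc (card (A j) - \<alpha>) t)"
      using t card_block_pos by (rule moment_formula_abs_power)
    ultimately show ?thesis
      by (simp add: field_simps)
  qed
  have "ennreal ?K * (\<integral>\<^sup>+t\<in>{0<..}. ennreal (?f t) \<partial>lborel) = (\<integral>\<^sup>+t. ennreal ?K * (ennreal (?f t) * indicator {0<..} t) \<partial>lborel)"
    by (rule nn_integral_cmult[symmetric]) measurable
  also have "\<dots> = (\<integral>\<^sup>+t\<in>{0<..}. ennreal (t ^ (n - 1) / fact (n - 1)
        * moment_formula k (\<lambda>x. t * \<bar>x\<bar>) (\<lambda>j x. \<bar>x\<bar> ^ card (A j))) \<partial>lborel)"
  proof (rule nn_integral_cong)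
    fix t :: real
    show "ennreal ?K * (ennreal (?f t) * indicator {0<..} t) = ennreal (t ^ (n - 1) / fact (n - 1)
        * moment_formula k (\<lambda>x. t * \<bar>x\<bar>) (\<lambda>j x. \<bar>x\<bar> ^ card (A j))) * indicator {0<..} t"
    proof (cases "0 < t")
      case True
      have "ennreal ?K * ennreal (?f t) = ennreal (t ^ (n - 1) / fact (n - 1)
          * moment_formula k (\<lambda>x. t * \<bar>x\<bar>) (\<lambda>j x. \<bar>x\<bar> ^ card (A j)))"
        using K by (simp only: ennreal_mult'[symmetric] pointwise[OF True])
      then show ?thesis unfolding mult.assoc[symmetric] by simp
    qed simp
  qed
  finally show ?thesis .
qed

lemma levy_integrand_eq_gamma_integral:
  fixes x :: "nat \<Rightarrow> real" and m :: "nat \<Rightarrow> nat"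
  assumes n: "0 < n" and w: "0 < w" and x: "\<And>i. i < k \<Longrightarrow> 0 < x i" and g: "0 \<le> g"
  shows "ennreal (g * (\<Prod>i<k. rho (x i) * x i ^ m i) / (w + (\<Sum>i<k. x i)) ^ n)
    = (\<integral>\<^sup>+t\<in>{0<..}. ennreal (t ^ (n - 1) / fact (n - 1))
        * (ennreal (exp (- t * w) * g) * (\<Prod>i<k. ennreal (rho (x i) * x i ^ m i * exp (- t * x i)))) \<partial>lborel)"
proof -
  let ?P = "\<Prod>i<k. rho (x i) * x i ^ m i" and ?T = "w + (\<Sum>i<k. x i)"
  have P: "0 \<le> ?P" using x by (intro prod_nonneg mult_nonneg_nonneg) (auto simp: rho_nonneg less_imp_le)
  have T: "0 < ?T" using w x by (intro add_pos_nonneg sum_nonneg) (auto intro: less_imp_le)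
  have "ennreal (g * ?P / ?T ^ n) = ennreal (g * ?P) * ennreal (1 / ?T ^ n)"
    using g P T by (simp add: ennreal_mult'[symmetric])
  also have "\<dots> = (\<integral>\<^sup>+t. ennreal (g * ?P) * (ennreal (t ^ (n - 1) / fact (n - 1) * exp (- t * ?T)) * indicator {0<..} t) \<partial>lborel)"
    unfolding inverse_power_eq_gamma_integral[OF T n] by (rule nn_integral_cmult[symmetric]) measurable
  also have "\<dots> = (\<integral>\<^sup>+t\<in>{0<..}. ennreal (t ^ (n - 1) / fact (n - 1))
      * (ennreal (exp (- t * w) * g) * (\<Prod>i<k. ennreal (rho (x i) * x i ^ m i * exp (- t * x i)))) \<partial>lborel)"
  proof (rule nn_integral_cong)
    fix t :: real
    have exponent: "- t * ?T = - t * w + (\<Sum>i<k. - t * x i)"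
      by (simp add: distrib_left sum_distrib_left)
    have "exp (- t * ?T) = exp (- t * w) * (\<Prod>i<k. exp (- t * x i))"
      unfolding exponent by (simp only: exp_add exp_sum finite_lessThan)
    moreover have "(\<Prod>i<k. ennreal (rho (x i) * x i ^ m i * exp (- t * x i))) = ennreal (?P * (\<Prod>i<k. exp (- t * x i)))"
      using x by (subst prod_ennreal) (auto simp: rho_nonneg prod.distrib less_imp_le)
    ultimately show "ennreal (g * ?P) * (ennreal (t ^ (n - 1) / fact (n - 1) * exp (- t * ?T)) * indicator {0<..} t)
        = ennreal (t ^ (n - 1) / fact (n - 1)) * (ennreal (exp (- t * w) * g)
          * (\<Prod>i<k. ennreal (rho (x i) * x i ^ m i * exp (- t * x i)))) * indicator {0<..} t"
      using g P by (cases "0 < t") (simp_all add: ennreal_mult'[symmetric] prod_nonneg mult_ac)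
  qed
  finally show ?thesis .
qed

lemma levy_integral_eq_gamma_integral:
  fixes x :: "nat \<Rightarrow> real" and m :: "nat \<Rightarrow> nat" and g :: "real \<Rightarrow> real"
  assumes n: "0 < n" and x: "x \<in> extensional {..<k}" and g: "\<And>w. 0 < w \<Longrightarrow> 0 \<le> g w"
  shows "(\<integral>\<^sup>+w\<in>{0<..}. ennreal (g w * (\<Prod>i<k. rho (x i) * x i ^ m i) / (w + (\<Sum>i<k. x i)) ^ n) \<partial>lborel)
      * indicator ({..<k} \<rightarrow>\<^sub>E {0<..}) x
    = (\<integral>\<^sup>+w. \<integral>\<^sup>+t. ennreal (t ^ (n - 1) / fact (n - 1)) * indicator {0<..} t
        * (ennreal (exp (- t * w) * g w) * indicator {0<..} w
          * (\<Prod>i<k. ennreal (rho (x i) * x i ^ m i * exp (- t * x i)))) \<partial>lborel \<partial>lborel)"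
proof (cases "x \<in> {..<k} \<rightarrow>\<^sub>E {0<..}")
  case False
  with x obtain i where "i < k" "\<not> 0 < x i" by (auto simp: PiE_def Pi_def)
  then have zero: "(\<Prod>i<k. ennreal (rho (x i) * x i ^ m i * exp (- t * x i))) = 0" for t
    by (auto intro!: prod_zero bexI[of _ i] simp: rhoPD_def)
  show ?thesis using False unfolding zero by simp
next
  case True
  then have "\<And>i. i < k \<Longrightarrow> 0 < x i" by auto
  from levy_integrand_eq_gamma_integral[OF n _ this g] True show ?thesis
    by (auto intro!: nn_integral_cong simp: indicator_def mult_ac)
qed

lemma levy_inner_integral:
  fixes g :: "real \<Rightarrow> real" and m :: "nat \<Rightarrow> nat"
  assumes [measurable]: "g \<in> borel_measurable borel" and t: "0 < t" and m: "\<And>i. i < k \<Longrightarrow> 0 < m i"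
    and g_laplace: "(\<integral>\<^sup>+w\<in>{0<..}. ennreal (exp (- t * w) * g w) \<partial>lborel) = ennreal (PsiPD \<alpha> t powr (-(r + real k)))"
  shows "ennreal (pochhammer r k) * (\<integral>\<^sup>+x. \<integral>\<^sup>+w. ennreal (exp (- t * w) * g w) * indicator {0<..} w
        * (\<Prod>i<k. ennreal (rho (x i) * x i ^ m i * exp (- t * x i))) \<partial>lborel \<partial>PiM {..<k} (\<lambda>_. lborel))
    = ennreal (moment_formula k (\<lambda>x. t * \<bar>x\<bar>) (\<lambda>j x. \<bar>x\<bar> ^ m j))"
proof -
  interpret product_sigma_finite "\<lambda>_::nat. lborel::real measure" ..
  have "(\<integral>\<^sup>+x. \<integral>\<^sup>+w. ennreal (exp (- t * w) * g w) * indicator {0<..} w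
        * (\<Prod>i<k. ennreal (rho (x i) * x i ^ m i * exp (- t * x i))) \<partial>lborel \<partial>PiM {..<k} (\<lambda>_. lborel))
      = (\<integral>\<^sup>+x. ennreal (PsiPD \<alpha> t powr (-(r + real k))) * (\<Prod>i<k. ennreal (rho (x i) * x i ^ m i * exp (- t * x i)))
          \<partial>PiM {..<k} (\<lambda>_. lborel))"
  proof (rule nn_integral_cong)
    fix x :: "nat \<Rightarrow> real"
    have "(\<integral>\<^sup>+w. ennreal (exp (- t * w) * g w) * indicator {0<..} w
          * (\<Prod>i<k. ennreal (rho (x i) * x i ^ m i * exp (- t * x i))) \<partial>lborel)
        = (\<integral>\<^sup>+w. ennreal (exp (- t * w) * g w) * indicator {0<..} w \<partial>lborel)
          * (\<Prod>i<k. ennreal (rho (x i) * x i ^ m i * exp (- t * x i)))"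
      by (rule nn_integral_multc) measurable
    then show "(\<integral>\<^sup>+w. ennreal (exp (- t * w) * g w) * indicator {0<..} w
          * (\<Prod>i<k. ennreal (rho (x i) * x i ^ m i * exp (- t * x i))) \<partial>lborel)
        = ennreal (PsiPD \<alpha> t powr (-(r + real k))) * (\<Prod>i<k. ennreal (rho (x i) * x i ^ m i * exp (- t * x i)))"
      unfolding g_laplace .
  qed
  also have "\<dots> = ennreal (PsiPD \<alpha> t powr (-(r + real k)))
      * (\<integral>\<^sup>+x. (\<Prod>i<k. ennreal (rho (x i) * x i ^ m i * exp (- t * x i))) \<partial>PiM {..<k} (\<lambda>_. lborel))"
    by (rule nn_integral_cmult) measurable
  also have "(\<integral>\<^sup>+x. (\<Prod>i<k. ennreal (rho (x i) * x i ^ m i * exp (- t * x i))) \<partial>PiM {..<k} (\<lambda>_. lborel))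
      = (\<Prod>i<k. \<integral>\<^sup>+y. ennreal (rho y * y ^ m i * exp (- t * y)) \<partial>lborel)"
    by (rule product_nn_integral_prod) auto
  also have "\<dots> = (\<Prod>i<k. ennreal (tilted_integral (\<lambda>x. t * \<bar>x\<bar>) (\<lambda>x. \<bar>x\<bar> ^ m i)))"
    using t m by (simp add: tilted_integral_abs_power less_imp_le)
  also have "\<dots> = ennreal (\<Prod>i<k. tilted_integral (\<lambda>x. t * \<bar>x\<bar>) (\<lambda>x. \<bar>x\<bar> ^ m i))"
    using m by (intro prod_ennreal tilted_integral_nonneg adm_factor_abs_power) auto
  finally show ?thesis
    unfolding moment_formula_def Phi_scaled_abs using r m
    by (simp add: ennreal_mult'[symmetric] pochhammer_nonneg prod_nonneg tilted_integral_nonneg adm_factor_abs_power mult_ac)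
qed

lemma levy_form_eq_moment_integral:
  fixes g :: "real \<Rightarrow> real"
  assumes "blocks n k A" and k: "1 \<le> k"
    and g_measurable[measurable]: "g \<in> borel_measurable borel" and g_nonneg: "\<And>x. 0 < x \<Longrightarrow> 0 \<le> g x"
    and g_laplace: "\<And>s. 0 \<le> s \<Longrightarrow>
        (\<integral>\<^sup>+x\<in>{0<..}. ennreal (exp (-s*x) * g x) \<partial>lborel) = ennreal (PsiPD \<alpha> s powr (-(r + real k)))"
  shows "ennreal (pochhammer r k) * (\<integral>\<^sup>+x\<in>({..<k} \<rightarrow>\<^sub>E {0<..}). (\<integral>\<^sup>+w\<in>{0<..}.
        ennreal (g w * (\<Prod>i<k. rhoPD \<alpha> (x i) * x i ^ card (A i)) / (w + (\<Sum>i<k. x i)) ^ n) \<partial>lborel)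
      \<partial>(PiM {..<k} (\<lambda>_. lborel)))
    = (\<integral>\<^sup>+t\<in>{0<..}. ennreal (t ^ (n - 1) / fact (n - 1)
        * moment_formula k (\<lambda>x. t * \<bar>x\<bar>) (\<lambda>j x. \<bar>x\<bar> ^ card (A j))) \<partial>lborel)"
proof -
  interpret blocks n k A by fact
  interpret product_sigma_finite "\<lambda>_::nat. lborel::real measure" ..
  let ?PM = "PiM {..<k} (\<lambda>_. lborel::real measure)" and ?c = "\<lambda>t::real. t ^ (n - 1) / fact (n - 1)"
  define K where "K x w t = ennreal (exp (- t * w) * g w) * indicator {0<..} w
    * (\<Prod>i<k. ennreal (rho (x i) * x i ^ card (A i) * exp (- t * x i)))" for x w t
  define H where "H x w t = ennreal (?c t) * indicator {0<..} t * K x w t" for x w t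
  have "(\<lambda>p. H (fst (fst p)) (snd p) (snd (fst p))) \<in> borel_measurable ((?PM \<Otimes>\<^sub>M lborel) \<Otimes>\<^sub>M lborel)"
    unfolding H_def K_def by measurable
  moreover have "(\<lambda>(w, t). H x w t) \<in> borel_measurable (lborel \<Otimes>\<^sub>M lborel)" for x
    unfolding H_def K_def by measurable
  ultimately have swap: "(\<integral>\<^sup>+x. \<integral>\<^sup>+w. \<integral>\<^sup>+t. H x w t \<partial>lborel \<partial>lborel \<partial>?PM) = (\<integral>\<^sup>+t. \<integral>\<^sup>+x. \<integral>\<^sup>+w. H x w t \<partial>lborel \<partial>?PM \<partial>lborel)"
    and measurable_t: "(\<lambda>t. \<integral>\<^sup>+x. \<integral>\<^sup>+w. H x w t \<partial>lborel \<partial>?PM) \<in> borel_measurable lborel"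
    by (intro nn_integral_triple_swap sigma_finite lborel.sigma_finite_measure_axioms; simp add: split_beta')+
  have "(\<integral>\<^sup>+x\<in>({..<k} \<rightarrow>\<^sub>E {0<..}). (\<integral>\<^sup>+w\<in>{0<..}.
        ennreal (g w * (\<Prod>i<k. rho (x i) * x i ^ card (A i)) / (w + (\<Sum>i<k. x i)) ^ n) \<partial>lborel) \<partial>?PM)
      = (\<integral>\<^sup>+x. \<integral>\<^sup>+w. \<integral>\<^sup>+t. H x w t \<partial>lborel \<partial>lborel \<partial>?PM)"
  proof (rule nn_integral_cong)
    fix x assume "x \<in> space ?PM"
    then have "x \<in> extensional {..<k}" by (simp add: space_PiM PiE_def)
    from levy_integral_eq_gamma_integral[OF n_pos[OF k] this g_nonneg]
    show "(\<integral>\<^sup>+w\<in>{0<..}. ennreal (g w * (\<Prod>i<k. rho (x i) * x i ^ card (A i)) / (w + (\<Sum>i<k. x i)) ^ n) \<partial>lborel)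
        * indicator ({..<k} \<rightarrow>\<^sub>E {0<..}) x = (\<integral>\<^sup>+w. \<integral>\<^sup>+t. H x w t \<partial>lborel \<partial>lborel)"
      unfolding H_def K_def by simp
  qed
  also note swap
  finally have "ennreal (pochhammer r k) * (\<integral>\<^sup>+x\<in>({..<k} \<rightarrow>\<^sub>E {0<..}). (\<integral>\<^sup>+w\<in>{0<..}.
        ennreal (g w * (\<Prod>i<k. rho (x i) * x i ^ card (A i)) / (w + (\<Sum>i<k. x i)) ^ n) \<partial>lborel) \<partial>?PM)
      = (\<integral>\<^sup>+t. ennreal (pochhammer r k) * (\<integral>\<^sup>+x. \<integral>\<^sup>+w. H x w t \<partial>lborel \<partial>?PM) \<partial>lborel)"
    by (simp add: nn_integral_cmult[OF measurable_t])
  also have "\<dots> = (\<integral>\<^sup>+t\<in>{0<..}. ennreal (?c t * moment_formula k (\<lambda>x. t * \<bar>x\<bar>) (\<lambda>j x. \<bar>x\<bar> ^ card (A j))) \<partial>lborel)"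
  proof (rule nn_integral_cong)
    fix t :: real
    show "ennreal (pochhammer r k) * (\<integral>\<^sup>+x. \<integral>\<^sup>+w. H x w t \<partial>lborel \<partial>?PM)
        = ennreal (?c t * moment_formula k (\<lambda>x. t * \<bar>x\<bar>) (\<lambda>j x. \<bar>x\<bar> ^ card (A j))) * indicator {0<..} t"
    proof (cases "0 < t")
      case True
      have "(\<integral>\<^sup>+w. ennreal (?c t) * K x w t \<partial>lborel) = ennreal (?c t) * (\<integral>\<^sup>+w. K x w t \<partial>lborel)" for x
        by (rule nn_integral_cmult) (unfold K_def, measurable)
      moreover have "(\<integral>\<^sup>+x. ennreal (?c t) * (\<integral>\<^sup>+w. K x w t \<partial>lborel) \<partial>?PM)
          = ennreal (?c t) * (\<integral>\<^sup>+x. \<integral>\<^sup>+w. K x w t \<partial>lborel \<partial>?PM)"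
        by (rule nn_integral_cmult) (unfold K_def, measurable)
      ultimately have H_K: "(\<integral>\<^sup>+x. \<integral>\<^sup>+w. H x w t \<partial>lborel \<partial>?PM) = ennreal (?c t) * (\<integral>\<^sup>+x. \<integral>\<^sup>+w. K x w t \<partial>lborel \<partial>?PM)"
        using True by (simp add: H_def)
      have "ennreal (pochhammer r k) * (\<integral>\<^sup>+x. \<integral>\<^sup>+w. H x w t \<partial>lborel \<partial>?PM)
          = ennreal (?c t) * (ennreal (pochhammer r k) * (\<integral>\<^sup>+x. \<integral>\<^sup>+w. K x w t \<partial>lborel \<partial>?PM))"
        unfolding H_K by (simp add: mult_ac)
      also have "ennreal (pochhammer r k) * (\<integral>\<^sup>+x. \<integral>\<^sup>+w. K x w t \<partial>lborel \<partial>?PM)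
          = ennreal (moment_formula k (\<lambda>x. t * \<bar>x\<bar>) (\<lambda>j x. \<bar>x\<bar> ^ card (A j)))"
        unfolding K_def by (rule levy_inner_integral[OF g_measurable True card_block_pos g_laplace[OF less_imp_le[OF True]]])
      finally show ?thesis
        using True by (simp add: ennreal_mult'[symmetric])
    qed (simp add: H_def)
  qed
  finally show ?thesis by (simp add: rhoPD_def)
qed

end

theorem theorem8p2:
  fixes \<alpha> r :: real
    and M :: "'a measure" and J :: "'a \<Rightarrow> nat \<Rightarrow> real"
    and g :: "real \<Rightarrow> real"
    and n k :: nat and A :: "nat \<Rightarrow> nat set"
  assumes alpha: "0 < \<alpha>" "\<alpha> < 1" and r: "0 < r"
    and M: "prob_space M"
    and J_meas: "\<And>i. (\<lambda>\<omega>. J \<omega> i) \<in> borel_measurable M"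
    and J_ranked: "AE \<omega> in M. decseq (J \<omega>) \<and> (\<forall>i. 0 < J \<omega> i) \<and> summable (J \<omega>)"
    and J_NB: "\<And>f. f \<in> borel_measurable borel \<Longrightarrow> (\<forall>x. 0 \<le> f x) \<Longrightarrow>
        (\<integral>\<^sup>+\<omega>. ennreal (expneg (\<Sum>i. ennreal (f (J \<omega> i)))) \<partial>M) = ennreal (NB_laplace \<alpha> r f)"
    and g_meas: "g \<in> borel_measurable borel"
    and g_nonneg: "\<And>x. 0 < x \<Longrightarrow> 0 \<le> g x"
    and g_prob: "(\<integral>\<^sup>+x\<in>{0<..}. ennreal (g x) \<partial>lborel) = 1"
    and g_laplace: "\<And>s. 0 \<le> s \<Longrightarrow>
        (\<integral>\<^sup>+x\<in>{0<..}. ennreal (exp (-s*x) * g x) \<partial>lborel) = ennreal (PsiPD \<alpha> s powr (-(r + real k)))"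
    and k: "1 \<le> k"
    and A_ne: "\<And>i. i < k \<Longrightarrow> A i \<noteq> {}"
    and A_disj: "\<And>i j. i < k \<Longrightarrow> j < k \<Longrightarrow> i \<noteq> j \<Longrightarrow> A i \<inter> A j = {}"
    and A_cover: "(\<Union>i<k. A i) = {1..n}"
  shows
    "(\<integral>\<^sup>+\<omega>. sample_partition_prob (\<lambda>i. J \<omega> i / (\<Sum>j. J \<omega> j)) n (A ` {..<k}) \<partial>M)
       = ennreal (pochhammer r k) *
         (\<integral>\<^sup>+x\<in>({..<k} \<rightarrow>\<^sub>E {0<..}). (\<integral>\<^sup>+w\<in>{0<..}.
             ennreal (g w * (\<Prod>i<k. rhoPD \<alpha> (x i) * x i ^ card (A i))
                       / (w + (\<Sum>i<k. x i)) ^ n) \<partial>lborel)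
          \<partial>(PiM {..<k} (\<lambda>_. lborel)))
   \<and> (\<integral>\<^sup>+\<omega>. sample_partition_prob (\<lambda>i. J \<omega> i / (\<Sum>j. J \<omega> j)) n (A ` {..<k}) \<partial>M)
       = ennreal (\<alpha> ^ k * pochhammer r k / Gamma (real n)
                   * (\<Prod>i<k. Gamma (real (card (A i)) - \<alpha>))) *
         (\<integral>\<^sup>+t\<in>{0<..}. ennreal (t powr (real k * \<alpha> - 1) / PsiPD \<alpha> t powr (r + real k)
             * (\<Prod>i<k. Ginc (real (card (A i)) - \<alpha>) t)) \<partial>lborel)"
proof -
  interpret neg_binomial_jumps M \<alpha> r J
    using M alpha r J_meas J_ranked J_NB by (intro neg_binomial_jumps.intro neg_binomial_jumps_axioms.intro) auto
  have B: "blocks n k A"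
    using A_ne A_disj A_cover by (intro blocks.intro) auto
  show ?thesis
    using partition_prob_eq_moment_integral[OF B k]
      levy_form_eq_moment_integral[OF B k g_meas g_nonneg g_laplace]
      gamma_form_eq_moment_integral[OF B k]
    by simp
qed

end
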